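(* Let $G$ be a finite group, $T$ a $G$-Tambara functor, and $I,J$ Tambara ideals of $T$. Then $\sqrt{IJ}=\sqrt I\cap\sqrt J$.
   Context: All rings are commutative with unit. A $G$-Tambara functor $T$ consists of commutative rings $T(G/H)$ for subgroups $H\le G$ with restriction ring maps, additive transfer maps, multiplicative norm maps and conjugation isomorphisms satisfying the standard Tambara axioms (Hill–Mazur). A Tambara ideal is a family of ring ideals $I(G/H)\subseteq T(G/H)$ closed under restriction, transfer, norm and conjugation; intersections are levelwise. $\langle x\rangle$ is the Tambara ideal generated by $x$. The product $IJ$ is the Tambara ideal generated by the levelwise products $I(G/H)\cdot J(G/H)$, $H\le G$. The radical $\sqrt I$ is the Tambara ideal with $\sqrt I(G/H)=\{x\in T(G/H)\mid \langle x\rangle^n\subseteq I\text{ for some }n\ge1\}$, $\langle x\rangle^n$ the $n$-fold product. *)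

theory Defs
  imports "HOL-Algebra.Algebra" "HOL-Library.FuncSet"
begin

text \<open>A G-Tambara functor is given by its values T(G/H) at the subgroups H of G
  (all levels live in one ambient element type 'r, each with its own carrier), together with
  restrictions tres H K : T(H) -> T(K), transfers ttr K H : T(K) -> T(H) and norms
  tnm K H : T(K) -> T(H) for K <= H, and conjugations tcj g H : T(H) -> T(gHg^-1).\<close>

record ('g, 'r) tambara =
  tlev :: "'g set \<Rightarrow> 'r ring"
  tres :: "'g set \<Rightarrow> 'g set \<Rightarrow> 'r \<Rightarrow> 'r"
  ttr  :: "'g set \<Rightarrow> 'g set \<Rightarrow> 'r \<Rightarrow> 'r"
  tnm  :: "'g set \<Rightarrow> 'g set \<Rightarrow> 'r \<Rightarrow> 'r"
  tcj  :: "'g \<Rightarrow> 'g set \<Rightarrow> 'r \<Rightarrow> 'r"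

definition conjg :: "('g, 'b) monoid_scheme \<Rightarrow> 'g \<Rightarrow> 'g set \<Rightarrow> 'g set" where
  "conjg G g K = (\<lambda>k. g \<otimes>\<^bsub>G\<^esub> k \<otimes>\<^bsub>G\<^esub> inv\<^bsub>G\<^esub> g) ` K"

definition subgrp_le :: "('g, 'b) monoid_scheme \<Rightarrow> 'g set \<Rightarrow> 'g set \<Rightarrow> bool" where
  "subgrp_le G K H \<longleftrightarrow> subgroup K G \<and> subgroup H G \<and> K \<subseteq> H"

definition lcos :: "('g, 'b) monoid_scheme \<Rightarrow> 'g set \<Rightarrow> 'g set \<Rightarrow> 'g set set" where
  "lcos G H K = {l_coset G h K | h. h \<in> H}"

definition dcos :: "('g, 'b) monoid_scheme \<Rightarrow> 'g set \<Rightarrow> 'g set \<Rightarrow> 'g set \<Rightarrow> 'g set set" where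
  "dcos G H K L = {set_mult G (r_coset G K g) L | g. g \<in> H}"

text \<open>Exponential diagram data for H/K <- (disjoint union over i<n of H/L_i) (where L_i <= K <= H),
  pushed forward to H/H: the H-set of sections of the projection.\<close>

definition efib :: "('g, 'b) monoid_scheme \<Rightarrow> 'g set \<Rightarrow> 'g set \<Rightarrow> nat \<Rightarrow> (nat \<Rightarrow> 'g set)
    \<Rightarrow> 'g set \<Rightarrow> (nat \<times> 'g set) set" where
  "efib G H K n L x = {(i, C) | i C. i < n \<and> C \<in> lcos G H (L i) \<and> set_mult G C K = x}"

definition esections :: "('g, 'b) monoid_scheme \<Rightarrow> 'g set \<Rightarrow> 'g set \<Rightarrow> nat \<Rightarrow> (nat \<Rightarrow> 'g set)
    \<Rightarrow> ('g set \<Rightarrow> nat \<times> 'g set) set" where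
  "esections G H K n L = PiE (lcos G H K) (efib G H K n L)"

definition esact :: "('g, 'b) monoid_scheme \<Rightarrow> 'g set \<Rightarrow> 'g set \<Rightarrow> 'g
    \<Rightarrow> ('g set \<Rightarrow> nat \<times> 'g set) \<Rightarrow> ('g set \<Rightarrow> nat \<times> 'g set)" where
  "esact G H K h s = (\<lambda>x \<in> lcos G H K.
      (fst (s (l_coset G (inv\<^bsub>G\<^esub> h) x)), l_coset G h (snd (s (l_coset G (inv\<^bsub>G\<^esub> h) x)))))"

definition estab :: "('g, 'b) monoid_scheme \<Rightarrow> 'g set \<Rightarrow> 'g set
    \<Rightarrow> ('g set \<Rightarrow> nat \<times> 'g set) \<Rightarrow> 'g set" where
  "estab G H K s = {h \<in> H. esact G H K h s = s}"

definition eorbits :: "('g, 'b) monoid_scheme \<Rightarrow> 'g set \<Rightarrow> 'g set \<Rightarrow> nat \<Rightarrow> (nat \<Rightarrow> 'g set)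
    \<Rightarrow> ('g set \<Rightarrow> nat \<times> 'g set) set set" where
  "eorbits G H K n L = {{esact G H K h s | h. h \<in> H} | s. s \<in> esections G H K n L}"

text \<open>Orbit representatives are chosen with SOME; the value does not
  depend on the choice.\<close>
definition eterm :: "('g, 'b) monoid_scheme \<Rightarrow> ('g, 'r) tambara \<Rightarrow> 'g set \<Rightarrow> 'g set
    \<Rightarrow> (nat \<Rightarrow> 'g set) \<Rightarrow> (nat \<Rightarrow> 'r) \<Rightarrow> ('g set \<Rightarrow> nat \<times> 'g set) \<Rightarrow> 'r" where
  "eterm G T H K L a s =
    (let S = estab G H K s in
     ttr T S H
      (\<Otimes>\<^bsub>tlev T S\<^esub> Ob \<in> {{l_coset G h x | h. h \<in> S} | x. x \<in> lcos G H K}.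
         (let x = (SOME x. x \<in> Ob);
              h = (SOME h. h \<in> x);
              i = fst (s x);
              h' = (SOME h'. h' \<in> snd (s x));
              Sx = S \<inter> conjg G h K
          in tnm T Sx S (tres T (conjg G h' (L i)) Sx (tcj T h' (L i) (a i))))))"

definition eformula :: "('g, 'b) monoid_scheme \<Rightarrow> ('g, 'r) tambara \<Rightarrow> 'g set \<Rightarrow> 'g set
    \<Rightarrow> nat \<Rightarrow> (nat \<Rightarrow> 'g set) \<Rightarrow> (nat \<Rightarrow> 'r) \<Rightarrow> 'r" where
  "eformula G T H K n L a =
     (\<Oplus>\<^bsub>tlev T H\<^esub> Ob \<in> eorbits G H K n L. eterm G T H K L a (SOME s. s \<in> Ob))"

definition tambara_functor :: "('g, 'b) monoid_scheme \<Rightarrow> ('g, 'r) tambara \<Rightarrow> bool" where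
  "tambara_functor G T \<longleftrightarrow>
    \<comment> \<open>levels are commutative rings\<close>
    (\<forall>H. subgroup H G \<longrightarrow> cring (tlev T H)) \<and>
    \<comment> \<open>restriction: ring maps; transfer: additive; norm: multiplicative, unital\<close>
    (\<forall>H K. subgrp_le G K H \<longrightarrow>
       tres T H K \<in> ring_hom (tlev T H) (tlev T K) \<and>
       tres T H K \<in> carrier (tlev T H) \<rightarrow> carrier (tlev T K) \<and>
       ttr T K H \<in> carrier (tlev T K) \<rightarrow> carrier (tlev T H) \<and>
       (\<forall>a \<in> carrier (tlev T K). \<forall>b \<in> carrier (tlev T K).
          ttr T K H (a \<oplus>\<^bsub>tlev T K\<^esub> b) = ttr T K H a \<oplus>\<^bsub>tlev T H\<^esub> ttr T K H b) \<and>
       tnm T K H \<in> carrier (tlev T K) \<rightarrow> carrier (tlev T H) \<and>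
       tnm T K H \<one>\<^bsub>tlev T K\<^esub> = \<one>\<^bsub>tlev T H\<^esub> \<and>
       (\<forall>a \<in> carrier (tlev T K). \<forall>b \<in> carrier (tlev T K).
          tnm T K H (a \<otimes>\<^bsub>tlev T K\<^esub> b) = tnm T K H a \<otimes>\<^bsub>tlev T H\<^esub> tnm T K H b) \<and>
       \<comment> \<open>Frobenius reciprocity\<close>
       (\<forall>a \<in> carrier (tlev T K). \<forall>b \<in> carrier (tlev T H).
          ttr T K H a \<otimes>\<^bsub>tlev T H\<^esub> b = ttr T K H (a \<otimes>\<^bsub>tlev T K\<^esub> tres T H K b))) \<and>
    \<comment> \<open>identities\<close>
    (\<forall>H. subgroup H G \<longrightarrow> (\<forall>a \<in> carrier (tlev T H).
       tres T H H a = a \<and> ttr T H H a = a \<and> tnm T H H a = a)) \<and>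
    \<comment> \<open>transitivity\<close>
    (\<forall>H K L. subgrp_le G L K \<longrightarrow> subgrp_le G K H \<longrightarrow>
       (\<forall>a \<in> carrier (tlev T H). tres T K L (tres T H K a) = tres T H L a) \<and>
       (\<forall>a \<in> carrier (tlev T L). ttr T K H (ttr T L K a) = ttr T L H a) \<and>
       (\<forall>a \<in> carrier (tlev T L). tnm T K H (tnm T L K a) = tnm T L H a)) \<and>
    \<comment> \<open>conjugations\<close>
    (\<forall>g \<in> carrier G. \<forall>H. subgroup H G \<longrightarrow>
       tcj T g H \<in> ring_hom (tlev T H) (tlev T (conjg G g H))) \<and>
    (\<forall>H. subgroup H G \<longrightarrow> (\<forall>h \<in> H. \<forall>a \<in> carrier (tlev T H). tcj T h H a = a)) \<and>
    (\<forall>g \<in> carrier G. \<forall>g' \<in> carrier G. \<forall>H. subgroup H G \<longrightarrow> (\<forall>a \<in> carrier (tlev T H).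
       tcj T g (conjg G g' H) (tcj T g' H a) = tcj T (g \<otimes>\<^bsub>G\<^esub> g') H a)) \<and>
    (\<forall>g \<in> carrier G. \<forall>H K. subgrp_le G K H \<longrightarrow>
       (\<forall>a \<in> carrier (tlev T H).
          tcj T g K (tres T H K a) = tres T (conjg G g H) (conjg G g K) (tcj T g H a)) \<and>
       (\<forall>a \<in> carrier (tlev T K).
          tcj T g H (ttr T K H a) = ttr T (conjg G g K) (conjg G g H) (tcj T g K a)) \<and>
       (\<forall>a \<in> carrier (tlev T K).
          tcj T g H (tnm T K H a) = tnm T (conjg G g K) (conjg G g H) (tcj T g K a))) \<and>
    \<comment> \<open>additive and multiplicative double coset (Mackey) formulas\<close>
    (\<forall>H K L. subgrp_le G K H \<longrightarrow> subgrp_le G L H \<longrightarrow> (\<forall>a \<in> carrier (tlev T L).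
       tres T H K (ttr T L H a) =
         (\<Oplus>\<^bsub>tlev T K\<^esub> D \<in> dcos G H K L.
            (let g = (SOME g. g \<in> D); M = conjg G (inv\<^bsub>G\<^esub> g) K \<inter> L in
             ttr T (K \<inter> conjg G g L) K (tcj T g M (tres T L M a)))) \<and>
       tres T H K (tnm T L H a) =
         (\<Otimes>\<^bsub>tlev T K\<^esub> D \<in> dcos G H K L.
            (let g = (SOME g. g \<in> D); M = conjg G (inv\<^bsub>G\<^esub> g) K \<inter> L in
             tnm T (K \<inter> conjg G g L) K (tcj T g M (tres T L M a)))))) \<and>
    \<comment> \<open>Tambara reciprocity: the exponential formula for the norm of a finite sum of transfers
       (covers the norm of a sum, the norm of a transfer and the norm of zero)\<close>
    (\<forall>H K n L a. subgrp_le G K H \<longrightarrow> (\<forall>i < n. subgrp_le G (L i) K) \<longrightarrow>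
       (\<forall>i < n. a i \<in> carrier (tlev T (L i))) \<longrightarrow>
       tnm T K H (\<Oplus>\<^bsub>tlev T K\<^esub> i \<in> {..<n}. ttr T (L i) K (a i)) = eformula G T H K n L a)"

definition tambara_ideal :: "('g, 'b) monoid_scheme \<Rightarrow> ('g, 'r) tambara \<Rightarrow> ('g set \<Rightarrow> 'r set) \<Rightarrow> bool" where
  "tambara_ideal G T I \<longleftrightarrow>
    (\<forall>H. subgroup H G \<longrightarrow> ideal (I H) (tlev T H)) \<and>
    (\<forall>H K. subgrp_le G K H \<longrightarrow>
       tres T H K ` I H \<subseteq> I K \<and> ttr T K H ` I K \<subseteq> I H \<and> tnm T K H ` I K \<subseteq> I H) \<and>
    (\<forall>g \<in> carrier G. \<forall>H. subgroup H G \<longrightarrow> tcj T g H ` I H \<subseteq> I (conjg G g H))"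

text \<open>Levelwise inclusion (only the levels at subgroups are meaningful)\<close>
definition tideal_le :: "('g, 'b) monoid_scheme \<Rightarrow> ('g set \<Rightarrow> 'r set) \<Rightarrow> ('g set \<Rightarrow> 'r set) \<Rightarrow> bool" where
  "tideal_le G I J \<longleftrightarrow> (\<forall>H. subgroup H G \<longrightarrow> I H \<subseteq> J H)"

definition tgen :: "('g, 'b) monoid_scheme \<Rightarrow> ('g, 'r) tambara \<Rightarrow> ('g set \<Rightarrow> 'r set) \<Rightarrow> ('g set \<Rightarrow> 'r set)" where
  "tgen G T Xs = (\<lambda>H. {r. \<forall>J. tambara_ideal G T J \<and> tideal_le G Xs J \<longrightarrow> r \<in> J H})"

definition tgen1 :: "('g, 'b) monoid_scheme \<Rightarrow> ('g, 'r) tambara \<Rightarrow> 'g set \<Rightarrow> 'r \<Rightarrow> ('g set \<Rightarrow> 'r set)" where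
  "tgen1 G T H0 x = tgen G T (\<lambda>K. if K = H0 then {x} else {})"

definition tprod :: "('g, 'b) monoid_scheme \<Rightarrow> ('g, 'r) tambara \<Rightarrow> ('g set \<Rightarrow> 'r set) \<Rightarrow> ('g set \<Rightarrow> 'r set) \<Rightarrow> ('g set \<Rightarrow> 'r set)" where
  "tprod G T I J = tgen G T (\<lambda>H. ideal_prod (tlev T H) (I H) (J H))"

fun tpow :: "('g, 'b) monoid_scheme \<Rightarrow> ('g, 'r) tambara \<Rightarrow> ('g set \<Rightarrow> 'r set) \<Rightarrow> nat \<Rightarrow> ('g set \<Rightarrow> 'r set)" where
  "tpow G T A 0 = (\<lambda>H. carrier (tlev T H))"
| "tpow G T A (Suc 0) = A"
| "tpow G T A (Suc (Suc n)) = tprod G T (tpow G T A (Suc n)) A"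

definition trad :: "('g, 'b) monoid_scheme \<Rightarrow> ('g, 'r) tambara \<Rightarrow> ('g set \<Rightarrow> 'r set) \<Rightarrow> ('g set \<Rightarrow> 'r set)" where
  "trad G T I = (\<lambda>H. {x \<in> carrier (tlev T H). \<exists>n \<ge> 1. tideal_le G (tpow G T (tgen1 G T H x) n) I})"

end

theory Submission
  imports Defs
begin

(* If <x>^n is contained in I and <x>^m in J, then <x>^(n+m) is contained in <x>^n <x>^m and hence
   in IJ; the converse inclusion is clear since IJ lies in I and in J. The first inclusion needs the
   associativity (XY)Z <= X(YZ) of the product of Tambara ideals, which follows from an explicit
   description of the product: XY(H) consists of the finite sums of transfers tr_L^H(xy) with
   x in X(L), y in Y(L). That these sums form a Tambara ideal is clear for transfers and
   conjugations and follows from the Mackey formula for restrictions. For norms one uses Tambara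
   reciprocity: the norm of a sum of transfers is a sum of transfers of products of norms of
   restricted conjugates, and as norms, restrictions and conjugations are multiplicative each such
   product of factors x_i y_i splits into a product of an element of X and one of Y. *)

lemma (in abelian_monoid) finsum_closed_subset:
  assumes V: "V \<subseteq> carrier G" "\<zero> \<in> V" "\<And>a b. a \<in> V \<Longrightarrow> b \<in> V \<Longrightarrow> a \<oplus> b \<in> V"
  shows "f \<in> A \<rightarrow> V \<Longrightarrow> finsum G f A \<in> V"
proof (induction A rule: infinite_finite_induct)
  case (insert a A)
  then have "f a \<in> V" "f \<in> A \<rightarrow> carrier G" using V(1) by auto
  with insert V show ?case by auto
qed (use V in auto)

lemma (in abelian_monoid) finsum_lessThan_add:
  fixes n m :: nat
  assumes f: "f \<in> {..<n + m} \<rightarrow> carrier G"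
  shows "finsum G f {..<n + m} = finsum G f {..<n} \<oplus> finsum G (\<lambda>i. f (n + i)) {..<m}"
proof -
  have "(+) n ` {..<m} = {n..<n + m}"
    by (simp add: lessThan_atLeast0 add.commute[of m n])
  then have split: "{..<n + m} = {..<n} \<union> (+) n ` {..<m}"
    by (simp add: ivl_disj_un_one(2))
  show ?thesis
    unfolding split using f
    by (subst finsum_Un_disjoint) (auto simp: finsum_reindex split Pi_def)
qed

lemma (in cring) finprod_in_ideal:
  assumes I: "ideal I R" and A: "finite A" "A \<noteq> {}"
  shows "f \<in> A \<rightarrow> I \<Longrightarrow> finprod R f A \<in> I"
  using A
proof (induction A rule: finite_ne_induct)
  case (insert a A)
  then have "f \<in> A \<rightarrow> carrier R" "f a \<in> carrier R" using ideal.Icarr[OF I] by auto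
  with insert show ?case using ideal.I_l_closed[OF I] by auto
qed (use ideal.Icarr[OF I] in auto)

lemma additive_hom_zero:
  assumes "abelian_group R" "abelian_group S" and h: "h \<in> carrier R \<rightarrow> carrier S"
    and add: "\<And>a b. a \<in> carrier R \<Longrightarrow> b \<in> carrier R \<Longrightarrow> h (a \<oplus>\<^bsub>R\<^esub> b) = h a \<oplus>\<^bsub>S\<^esub> h b"
  shows "h \<zero>\<^bsub>R\<^esub> = \<zero>\<^bsub>S\<^esub>"
proof -
  interpret R: abelian_group R by fact
  interpret S: abelian_group S by fact
  have "h \<zero>\<^bsub>R\<^esub> \<in> carrier S" using h by auto
  moreover have "h \<zero>\<^bsub>R\<^esub> \<oplus>\<^bsub>S\<^esub> h \<zero>\<^bsub>R\<^esub> = h \<zero>\<^bsub>R\<^esub> \<oplus>\<^bsub>S\<^esub> \<zero>\<^bsub>S\<^esub>"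
    using add[of "\<zero>\<^bsub>R\<^esub>" "\<zero>\<^bsub>R\<^esub>"] calculation by simp
  ultimately show ?thesis by (metis S.add.l_cancel_one' S.r_zero)
qed

lemma additive_hom_finsum:
  assumes R: "abelian_group R" and S: "abelian_group S" and h: "h \<in> carrier R \<rightarrow> carrier S"
    and add: "\<And>a b. a \<in> carrier R \<Longrightarrow> b \<in> carrier R \<Longrightarrow> h (a \<oplus>\<^bsub>R\<^esub> b) = h a \<oplus>\<^bsub>S\<^esub> h b"
    and f: "f \<in> A \<rightarrow> carrier R"
  shows "h (finsum R f A) = finsum S (h \<circ> f) A"
proof -
  interpret R: abelian_group R by fact
  interpret S: abelian_group S by fact
  have zero: "h \<zero>\<^bsub>R\<^esub> = \<zero>\<^bsub>S\<^esub>"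
    by (rule additive_hom_zero[of R S h]) (use R S h add in auto)
  from f show ?thesis
  proof (induction A rule: infinite_finite_induct)
    case (infinite A)
    with zero show ?case by (simp add: finsum_def finprod_def)
  next
    case empty
    with zero show ?case by simp
  next
    case (insert a A)
    then have f: "f \<in> A \<rightarrow> carrier R" "f a \<in> carrier R" by auto
    with h have hf: "h \<circ> f \<in> A \<rightarrow> carrier S" "h (f a) \<in> carrier S" by auto
    have "h (finsum R f (insert a A)) = h (f a) \<oplus>\<^bsub>S\<^esub> h (finsum R f A)"
      using insert.hyps f add by simp
    also have "\<dots> = finsum S (h \<circ> f) (insert a A)"
      using insert hf by (simp add: comp_def)
    finally show ?case .
  qed
qed

lemma ideal_prod_subset_ideal:
  assumes W: "ideal W R" and prod: "\<And>x y. x \<in> A \<Longrightarrow> y \<in> B \<Longrightarrow> x \<otimes>\<^bsub>R\<^esub> y \<in> W"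
  shows "ideal_prod R A B \<subseteq> W"
proof
  fix s assume "s \<in> ideal_prod R A B"
  then show "s \<in> W"
    by induction (use prod additive_subgroup.a_closed[OF ideal.axioms(1)[OF W]] in auto)
qed

lemma subgrp_le_lower: "subgrp_le G K H \<Longrightarrow> subgroup K G"
  and subgrp_le_upper: "subgrp_le G K H \<Longrightarrow> subgroup H G"
  and subgrp_le_refl: "subgroup H G \<Longrightarrow> subgrp_le G H H"
  and subgrp_le_trans: "subgrp_le G L K \<Longrightarrow> subgrp_le G K H \<Longrightarrow> subgrp_le G L H"
  unfolding subgrp_le_def by auto

context group
begin

lemma inv_mult_cancel_left [simp]: "g \<in> carrier G \<Longrightarrow> x \<in> carrier G \<Longrightarrow> inv g \<otimes> (g \<otimes> x) = x"
  and mult_inv_cancel_left [simp]: "g \<in> carrier G \<Longrightarrow> x \<in> carrier G \<Longrightarrow> g \<otimes> (inv g \<otimes> x) = x"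
  by (simp_all add: m_assoc[symmetric])

lemma conjg_subgroup:
  assumes g: "g \<in> carrier G" and H: "subgroup H G"
  shows "subgroup (conjg G g H) G"
proof (rule subgroupI)
  have Hc: "H \<subseteq> carrier G" using H subgroup.subset by blast
  show "conjg G g H \<subseteq> carrier G" unfolding conjg_def using g Hc by auto
  show "conjg G g H \<noteq> {}" unfolding conjg_def using subgroup.one_closed[OF H] by auto
  fix a b assume "a \<in> conjg G g H" and "b \<in> conjg G g H"
  then obtain k l where k: "k \<in> H" "a = g \<otimes> k \<otimes> inv g" and l: "l \<in> H" "b = g \<otimes> l \<otimes> inv g"
    unfolding conjg_def by auto
  have kl: "k \<in> carrier G" "l \<in> carrier G" using k l Hc by auto
  have "inv a = g \<otimes> inv k \<otimes> inv g" using k(2) kl g by (simp add: inv_mult_group m_assoc)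
  then show "inv a \<in> conjg G g H" unfolding conjg_def using subgroup.m_inv_closed[OF H k(1)] by auto
  have "a \<otimes> b = g \<otimes> (k \<otimes> l) \<otimes> inv g" using k(2) l(2) kl g by (simp add: m_assoc)
  then show "a \<otimes> b \<in> conjg G g H" unfolding conjg_def using subgroup.m_closed[OF H k(1) l(1)] by auto
qed

lemma conjg_subgrp_le: "g \<in> carrier G \<Longrightarrow> subgrp_le G K H \<Longrightarrow> subgrp_le G (conjg G g K) (conjg G g H)"
  unfolding subgrp_le_def using conjg_subgroup by (auto simp: conjg_def)

lemma conjg_conjg_inv:
  assumes g: "g \<in> carrier G" and K: "K \<subseteq> carrier G"
  shows "conjg G g (conjg G (inv g) K) = K"
proof -
  have "(\<lambda>k. g \<otimes> (inv g \<otimes> k \<otimes> inv (inv g)) \<otimes> inv g) ` K = id ` K"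
    using g K by (intro image_cong) (auto simp: m_assoc)
  then show ?thesis unfolding conjg_def image_image by simp
qed

lemma conjg_Int:
  assumes g: "g \<in> carrier G" and A: "A \<subseteq> carrier G" and B: "B \<subseteq> carrier G"
  shows "conjg G g (A \<inter> B) = conjg G g A \<inter> conjg G g B"
proof -
  have "inj_on (\<lambda>k. g \<otimes> k \<otimes> inv g) (carrier G)"
    by (rule inj_onI) (use g in auto)
  then show ?thesis unfolding conjg_def using A B by (simp add: inj_on_image_Int)
qed

lemma conjg_Int_conjg_inv:
  assumes g: "g \<in> carrier G" and K: "subgroup K G" and L: "subgroup L G"
  shows "conjg G g (conjg G (inv g) K \<inter> L) = K \<inter> conjg G g L"
  using conjg_Int[OF g subgroup.subset[OF conjg_subgroup[OF inv_closed[OF g] K]] subgroup.subset[OF L]]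
    conjg_conjg_inv[OF g subgroup.subset[OF K]] by simp

end

lemma tambara_ideal_level: "tambara_ideal G T I \<Longrightarrow> subgroup H G \<Longrightarrow> ideal (I H) (tlev T H)"
  by (simp add: tambara_ideal_def)

lemma tambara_ideal_subset: "tambara_ideal G T I \<Longrightarrow> subgroup H G \<Longrightarrow> I H \<subseteq> carrier (tlev T H)"
  by (meson ideal.Icarr subsetI tambara_ideal_level)

lemma tambara_ideal_res: "tambara_ideal G T I \<Longrightarrow> subgrp_le G K H \<Longrightarrow> a \<in> I H \<Longrightarrow> tres T H K a \<in> I K"
  and tambara_ideal_tr: "tambara_ideal G T I \<Longrightarrow> subgrp_le G K H \<Longrightarrow> a \<in> I K \<Longrightarrow> ttr T K H a \<in> I H"
  and tambara_ideal_nm: "tambara_ideal G T I \<Longrightarrow> subgrp_le G K H \<Longrightarrow> a \<in> I K \<Longrightarrow> tnm T K H a \<in> I H"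
  by (simp_all add: tambara_ideal_def image_subset_iff)

lemma tambara_ideal_cj:
  "tambara_ideal G T I \<Longrightarrow> g \<in> carrier G \<Longrightarrow> subgroup H G \<Longrightarrow> a \<in> I H \<Longrightarrow> tcj T g H a \<in> I (conjg G g H)"
  by (simp add: tambara_ideal_def image_subset_iff)

lemma tideal_le_refl: "tideal_le G A A"
  and tideal_le_trans [trans]: "tideal_le G A B \<Longrightarrow> tideal_le G B C \<Longrightarrow> tideal_le G A C"
  and tideal_leD: "tideal_le G A B \<Longrightarrow> subgroup H G \<Longrightarrow> x \<in> A H \<Longrightarrow> x \<in> B H"
  unfolding tideal_le_def by blast+

lemma tgen_memI: "(\<And>J. tambara_ideal G T J \<Longrightarrow> tideal_le G Xs J \<Longrightarrow> r \<in> J H) \<Longrightarrow> r \<in> tgen G T Xs H"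
  and tgen_memD: "r \<in> tgen G T Xs H \<Longrightarrow> tambara_ideal G T J \<Longrightarrow> tideal_le G Xs J \<Longrightarrow> r \<in> J H"
  unfolding tgen_def by blast+

lemma tgen_least: "tambara_ideal G T W \<Longrightarrow> tideal_le G Xs W \<Longrightarrow> tideal_le G (tgen G T Xs) W"
  and tgen_contains: "subgroup H G \<Longrightarrow> r \<in> Xs H \<Longrightarrow> r \<in> tgen G T Xs H"
  unfolding tideal_le_def tgen_def by blast+

lemma tprod_contains: "subgroup H G \<Longrightarrow> x \<in> I H \<Longrightarrow> y \<in> J H \<Longrightarrow> x \<otimes>\<^bsub>tlev T H\<^esub> y \<in> tprod G T I J H"
  unfolding tprod_def by (rule tgen_contains) (auto intro: ideal_prod.prod)

locale finite_tambara = group +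
  fixes T :: "('a, 'r) tambara"
  assumes tambara_functor: "tambara_functor G T" and finite_carrier: "finite (carrier G)"
begin

lemmas tambara_axioms = tambara_functor[unfolded tambara_functor_def]

lemma level_cring: "subgroup H G \<Longrightarrow> cring (tlev T H)"
  by (simp only: tambara_axioms)

lemma level_ring: "subgroup H G \<Longrightarrow> ring (tlev T H)"
  using level_cring cring.axioms(1) by blast

context
  fixes K H assumes KH: "subgrp_le G K H"
begin

lemma res_ring_hom: "tres T H K \<in> ring_hom (tlev T H) (tlev T K)"
  using KH by (simp only: tambara_axioms)

lemma tr_closed: "a \<in> carrier (tlev T K) \<Longrightarrow> ttr T K H a \<in> carrier (tlev T H)"
  by (rule funcset_mem[of "ttr T K H" "carrier (tlev T K)"]) (use KH in \<open>simp only: tambara_axioms\<close>)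

lemma nm_closed: "a \<in> carrier (tlev T K) \<Longrightarrow> tnm T K H a \<in> carrier (tlev T H)"
  by (rule funcset_mem[of "tnm T K H" "carrier (tlev T K)"]) (use KH in \<open>simp only: tambara_axioms\<close>)

lemma tr_add: "a \<in> carrier (tlev T K) \<Longrightarrow> b \<in> carrier (tlev T K) \<Longrightarrow>
    ttr T K H (a \<oplus>\<^bsub>tlev T K\<^esub> b) = ttr T K H a \<oplus>\<^bsub>tlev T H\<^esub> ttr T K H b"
  and nm_mult: "a \<in> carrier (tlev T K) \<Longrightarrow> b \<in> carrier (tlev T K) \<Longrightarrow>
    tnm T K H (a \<otimes>\<^bsub>tlev T K\<^esub> b) = tnm T K H a \<otimes>\<^bsub>tlev T H\<^esub> tnm T K H b"
  and tr_frobenius: "a \<in> carrier (tlev T K) \<Longrightarrow> b \<in> carrier (tlev T H) \<Longrightarrow>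
    ttr T K H a \<otimes>\<^bsub>tlev T H\<^esub> b = ttr T K H (a \<otimes>\<^bsub>tlev T K\<^esub> tres T H K b)"
  using KH by (simp_all only: tambara_axioms)

lemma res_tr_mackey: "subgrp_le G L H \<Longrightarrow> a \<in> carrier (tlev T L) \<Longrightarrow>
  tres T H K (ttr T L H a) =
    (\<Oplus>\<^bsub>tlev T K\<^esub> D \<in> dcos G H K L.
       (let g = (SOME g. g \<in> D); M = conjg G (inv\<^bsub>G\<^esub> g) K \<inter> L in
        ttr T (K \<inter> conjg G g L) K (tcj T g M (tres T L M a))))"
  using KH by (simp only: tambara_axioms)

lemma nm_sum_tr_exponential: "(\<forall>i < n. subgrp_le G (L i) K) \<Longrightarrow> (\<forall>i < n. a i \<in> carrier (tlev T (L i))) \<Longrightarrow>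
  tnm T K H (\<Oplus>\<^bsub>tlev T K\<^esub> i \<in> {..<n}. ttr T (L i) K (a i)) = eformula G T H K n L a"
  using KH by (simp only: tambara_axioms)

lemma res_closed: "a \<in> carrier (tlev T H) \<Longrightarrow> tres T H K a \<in> carrier (tlev T K)"
  and res_mult: "a \<in> carrier (tlev T H) \<Longrightarrow> b \<in> carrier (tlev T H) \<Longrightarrow>
    tres T H K (a \<otimes>\<^bsub>tlev T H\<^esub> b) = tres T H K a \<otimes>\<^bsub>tlev T K\<^esub> tres T H K b"
  and res_add: "a \<in> carrier (tlev T H) \<Longrightarrow> b \<in> carrier (tlev T H) \<Longrightarrow>
    tres T H K (a \<oplus>\<^bsub>tlev T H\<^esub> b) = tres T H K a \<oplus>\<^bsub>tlev T K\<^esub> tres T H K b"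
  by (simp_all add: ring_hom_closed[OF res_ring_hom] ring_hom_mult[OF res_ring_hom]
      ring_hom_add[OF res_ring_hom])

end

lemma tr_self: "subgroup H G \<Longrightarrow> a \<in> carrier (tlev T H) \<Longrightarrow> ttr T H H a = a"
  by (simp only: tambara_axioms)

lemma tr_trans: "subgrp_le G L K \<Longrightarrow> subgrp_le G K H \<Longrightarrow> a \<in> carrier (tlev T L) \<Longrightarrow>
  ttr T K H (ttr T L K a) = ttr T L H a"
  by (simp only: tambara_axioms)

lemma cj_ring_hom: "g \<in> carrier G \<Longrightarrow> subgroup H G \<Longrightarrow> tcj T g H \<in> ring_hom (tlev T H) (tlev T (conjg G g H))"
  by (simp only: tambara_axioms)

lemma cj_tr: "g \<in> carrier G \<Longrightarrow> subgrp_le G K H \<Longrightarrow> a \<in> carrier (tlev T K) \<Longrightarrow>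
  tcj T g H (ttr T K H a) = ttr T (conjg G g K) (conjg G g H) (tcj T g K a)"
  by (simp only: tambara_axioms)

lemma cj_closed: "g \<in> carrier G \<Longrightarrow> subgroup H G \<Longrightarrow> a \<in> carrier (tlev T H) \<Longrightarrow>
    tcj T g H a \<in> carrier (tlev T (conjg G g H))"
  and cj_mult: "g \<in> carrier G \<Longrightarrow> subgroup H G \<Longrightarrow> a \<in> carrier (tlev T H) \<Longrightarrow> b \<in> carrier (tlev T H) \<Longrightarrow>
    tcj T g H (a \<otimes>\<^bsub>tlev T H\<^esub> b) = tcj T g H a \<otimes>\<^bsub>tlev T (conjg G g H)\<^esub> tcj T g H b"
  and cj_add: "g \<in> carrier G \<Longrightarrow> subgroup H G \<Longrightarrow> a \<in> carrier (tlev T H) \<Longrightarrow> b \<in> carrier (tlev T H) \<Longrightarrow>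
    tcj T g H (a \<oplus>\<^bsub>tlev T H\<^esub> b) = tcj T g H a \<oplus>\<^bsub>tlev T (conjg G g H)\<^esub> tcj T g H b"
  by (simp_all add: ring_hom_closed[OF cj_ring_hom] ring_hom_mult[OF cj_ring_hom]
      ring_hom_add[OF cj_ring_hom])

lemma tambara_ideal_top: "tambara_ideal G T (\<lambda>H. carrier (tlev T H))"
  unfolding tambara_ideal_def
proof (intro conjI allI impI ballI subsetI)
  fix H assume "subgroup H G"
  then show "ideal (carrier (tlev T H)) (tlev T H)" using level_ring ring.oneideal by blast
next
  fix H K r assume "subgrp_le G K H" and "r \<in> tres T H K ` carrier (tlev T H)"
  then show "r \<in> carrier (tlev T K)" using res_closed by auto
next
  fix H K r assume "subgrp_le G K H" and "r \<in> ttr T K H ` carrier (tlev T K)"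
  then show "r \<in> carrier (tlev T H)" using tr_closed by auto
next
  fix H K r assume "subgrp_le G K H" and "r \<in> tnm T K H ` carrier (tlev T K)"
  then show "r \<in> carrier (tlev T H)" using nm_closed by auto
next
  fix g H r assume "g \<in> carrier G" "subgroup H G" and "r \<in> tcj T g H ` carrier (tlev T H)"
  then show "r \<in> carrier (tlev T (conjg G g H))" using cj_closed by auto
qed

lemma tambara_ideal_tgen:
  assumes X: "\<And>H. subgroup H G \<Longrightarrow> Xs H \<subseteq> carrier (tlev T H)"
  shows "tambara_ideal G T (tgen G T Xs)"
  unfolding tambara_ideal_def
proof (intro conjI allI impI ballI subsetI)
  let ?F = "{J. tambara_ideal G T J \<and> tideal_le G Xs J}"
  fix H assume H: "subgroup H G"
  have top: "(\<lambda>H. carrier (tlev T H)) \<in> ?F" using tambara_ideal_top X unfolding tideal_le_def by auto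
  have "tgen G T Xs H = \<Inter> ((\<lambda>J. J H) ` ?F)"
    unfolding tgen_def by auto
  also have "ideal \<dots> (tlev T H)"
    by (rule ring.i_Intersect[OF level_ring[OF H]]) (use top tambara_ideal_level[OF _ H] in auto)
  finally show "ideal (tgen G T Xs H) (tlev T H)" .
next
  fix H K r assume KH: "subgrp_le G K H" and "r \<in> tres T H K ` tgen G T Xs H"
  then obtain a where "a \<in> tgen G T Xs H" "r = tres T H K a" by blast
  then show "r \<in> tgen G T Xs K" by (intro tgen_memI) (blast intro: tambara_ideal_res[OF _ KH] dest: tgen_memD)
next
  fix H K r assume KH: "subgrp_le G K H" and "r \<in> ttr T K H ` tgen G T Xs K"
  then obtain a where "a \<in> tgen G T Xs K" "r = ttr T K H a" by blast
  then show "r \<in> tgen G T Xs H" by (intro tgen_memI) (blast intro: tambara_ideal_tr[OF _ KH] dest: tgen_memD)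
next
  fix H K r assume KH: "subgrp_le G K H" and "r \<in> tnm T K H ` tgen G T Xs K"
  then obtain a where "a \<in> tgen G T Xs K" "r = tnm T K H a" by blast
  then show "r \<in> tgen G T Xs H" by (intro tgen_memI) (blast intro: tambara_ideal_nm[OF _ KH] dest: tgen_memD)
next
  fix g H r assume g: "g \<in> carrier G" and H: "subgroup H G" and "r \<in> tcj T g H ` tgen G T Xs H"
  then obtain a where "a \<in> tgen G T Xs H" "r = tcj T g H a" by blast
  then show "r \<in> tgen G T Xs (conjg G g H)" by (intro tgen_memI) (blast intro: tambara_ideal_cj[OF _ g H] dest: tgen_memD)
qed

end

section \<open>Orbits of sections in the exponential formula\<close>

lemma finite_lcos: "finite H \<Longrightarrow> finite (lcos G H Q)"
proof -
  have "lcos G H Q = (\<lambda>h. l_coset G h Q) ` H" unfolding lcos_def by blast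
  then show "finite H \<Longrightarrow> finite (lcos G H Q)" by simp
qed

definition estab_orbits :: "('g, 'b) monoid_scheme \<Rightarrow> 'g set \<Rightarrow> 'g set
    \<Rightarrow> ('g set \<Rightarrow> nat \<times> 'g set) \<Rightarrow> 'g set set set" where
  "estab_orbits G H K s = {{l_coset G h x | h. h \<in> estab G H K s} | x. x \<in> lcos G H K}"

definition efactor :: "('g, 'b) monoid_scheme \<Rightarrow> ('g, 'r) tambara \<Rightarrow> 'g set \<Rightarrow> 'g set
    \<Rightarrow> (nat \<Rightarrow> 'g set) \<Rightarrow> (nat \<Rightarrow> 'r) \<Rightarrow> ('g set \<Rightarrow> nat \<times> 'g set) \<Rightarrow> 'g set set \<Rightarrow> 'r" where
  "efactor G T H K L a s Ob =
    (let S = estab G H K s; x = (SOME x. x \<in> Ob); h = (SOME h. h \<in> x); i = fst (s x);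
         h' = (SOME h'. h' \<in> snd (s x)); Sx = S \<inter> conjg G h K
     in tnm T Sx S (tres T (conjg G h' (L i)) Sx (tcj T h' (L i) (a i))))"

lemma eterm_eq_tr_finprod_efactor:
  "eterm G T H K L a s = ttr T (estab G H K s) H
     (finprod (tlev T (estab G H K s)) (efactor G T H K L a s) (estab_orbits G H K s))"
  unfolding eterm_def efactor_def estab_orbits_def by (simp only: Let_def)

lemma finite_estab_orbits: "finite H \<Longrightarrow> finite (estab_orbits G H K s)"
proof -
  have "estab_orbits G H K s = (\<lambda>x. {l_coset G h x | h. h \<in> estab G H K s}) ` lcos G H K"
    unfolding estab_orbits_def by blast
  then show "finite H \<Longrightarrow> finite (estab_orbits G H K s)" by (simp add: finite_lcos)
qed

context group
begin

lemma l_coset_memI: "q \<in> Q \<Longrightarrow> x \<otimes> q \<in> l_coset G x Q"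
  unfolding l_coset_def by auto

lemma l_coset_memE:
  assumes "y \<in> l_coset G x Q"
  obtains q where "q \<in> Q" "y = x \<otimes> q"
  using assms unfolding l_coset_def by auto

lemma l_coset_in_lcos:
  assumes H: "subgroup H G" and Q: "subgroup Q G" and h: "h \<in> H" and x: "x \<in> lcos G H Q"
  shows "l_coset G h x \<in> lcos G H Q"
proof -
  obtain h0 where h0: "h0 \<in> H" and x_eq: "x = l_coset G h0 Q" using x unfolding lcos_def by blast
  have "l_coset G h x = l_coset G (h \<otimes> h0) Q" unfolding x_eq
    by (rule lcos_m_assoc[OF subgroup.subset[OF Q] subgroup.mem_carrier[OF H h] subgroup.mem_carrier[OF H h0]])
  moreover have "h \<otimes> h0 \<in> H" by (rule subgroup.m_closed[OF H h h0])
  ultimately show ?thesis unfolding lcos_def by blast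
qed

lemma lcos_subset_carrier:
  assumes H: "subgroup H G" and Q: "subgroup Q G" and x: "x \<in> lcos G H Q"
  shows "x \<subseteq> carrier G"
proof -
  obtain h where "h \<in> H" "x = l_coset G h Q" using x unfolding lcos_def by blast
  then show ?thesis using l_coset_subset_G[OF subgroup.subset[OF Q] subgroup.mem_carrier[OF H]] by simp
qed

lemma subgroup_in_lcos:
  assumes "subgroup H G" "subgroup Q G"
  shows "Q \<in> lcos G H Q"
proof -
  have "l_coset G \<one> Q = Q" by (rule lcos_mult_one[OF subgroup.subset[OF assms(2)]])
  then show ?thesis unfolding lcos_def using subgroup.one_closed[OF assms(1)] by force
qed

lemma estab_orbits_nonempty: "subgroup H G \<Longrightarrow> subgroup K G \<Longrightarrow> estab_orbits G H K s \<noteq> {}"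
  unfolding estab_orbits_def using subgroup_in_lcos by blast

lemma lcos_some_rep:
  assumes H: "subgroup H G" and Q: "subgroup Q G" and QH: "Q \<subseteq> H" and x: "x \<in> lcos G H Q"
  shows "(SOME y. y \<in> x) \<in> x" "(SOME y. y \<in> x) \<in> H" "x = l_coset G (SOME y. y \<in> x) Q"
proof -
  obtain h0 where h0: "h0 \<in> H" and x_eq: "x = l_coset G h0 Q" using x unfolding lcos_def by blast
  have "h0 \<otimes> \<one> \<in> x" unfolding x_eq by (rule l_coset_memI[OF subgroup.one_closed[OF Q]])
  then show y: "(SOME y. y \<in> x) \<in> x" by (rule someI)
  then obtain q where q: "q \<in> Q" and y_eq: "(SOME y. y \<in> x) = h0 \<otimes> q"
    unfolding x_eq by (rule l_coset_memE)
  show "(SOME y. y \<in> x) \<in> H" unfolding y_eq using q QH by (intro subgroup.m_closed[OF H h0]) auto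
  show "x = l_coset G (SOME y. y \<in> x) Q" unfolding x_eq
    by (rule l_repr_independence[OF _ subgroup.mem_carrier[OF H h0] Q]) (use y x_eq in simp)
qed

lemma dcos_some_in:
  assumes H: "subgroup H G" and K: "subgroup K G" and L: "subgroup L G" and KH: "K \<subseteq> H" and LH: "L \<subseteq> H"
    and D: "D \<in> dcos G H K L"
  shows "(SOME g. g \<in> D) \<in> H"
proof -
  obtain g0 where D_eq: "D = set_mult G (r_coset G K g0) L" and g0: "g0 \<in> H"
    using D unfolding dcos_def by blast
  have "(\<one> \<otimes> g0) \<otimes> \<one> \<in> D"
    unfolding D_eq set_mult_def r_coset_def using subgroup.one_closed[OF K] subgroup.one_closed[OF L] by blast
  then have "(SOME g. g \<in> D) \<in> D" by (rule someI)
  then obtain k l where "k \<in> K" "l \<in> L" "(SOME g. g \<in> D) = k \<otimes> g0 \<otimes> l"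
    unfolding D_eq set_mult_def r_coset_def by blast
  then show ?thesis using g0 KH LH by (auto intro!: subgroup.m_closed[OF H])
qed

context
  fixes H K and n :: nat and L
  assumes KH: "subgrp_le G K H" and Ls: "\<And>i. i < n \<Longrightarrow> subgrp_le G (L i) K"
begin

private lemma H_subgroup: "subgroup H G" and K_subgroup: "subgroup K G" and K_subset_H: "K \<subseteq> H"
  and L_subgroup: "i < n \<Longrightarrow> subgroup (L i) G" and L_subset_H: "i < n \<Longrightarrow> L i \<subseteq> H"
  using KH Ls unfolding subgrp_le_def by blast+

lemma esections_value:
  assumes s: "s \<in> esections G H K n L" and x: "x \<in> lcos G H K"
  shows "fst (s x) < n" "snd (s x) \<in> lcos G H (L (fst (s x)))" "set_mult G (snd (s x)) K = x"
proof -
  have "s x \<in> efib G H K n L x" using s x unfolding esections_def by blast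
  then show "fst (s x) < n" "snd (s x) \<in> lcos G H (L (fst (s x)))" "set_mult G (snd (s x)) K = x"
    unfolding efib_def by auto
qed

lemma esact_closed:
  assumes h: "h \<in> H" and s: "s \<in> esections G H K n L"
  shows "esact G H K h s \<in> esections G H K n L"
  unfolding esections_def PiE_iff
proof (intro conjI ballI)
  show "esact G H K h s \<in> extensional (lcos G H K)" unfolding esact_def by simp
  fix x assume x: "x \<in> lcos G H K"
  have hc: "h \<in> carrier G" by (rule subgroup.mem_carrier[OF H_subgroup h])
  have y: "l_coset G (inv h) x \<in> lcos G H K"
    by (rule l_coset_in_lcos[OF H_subgroup K_subgroup subgroup.m_inv_closed[OF H_subgroup h] x])
  define i where "i = fst (s (l_coset G (inv h) x))"
  define C where "C = snd (s (l_coset G (inv h) x))"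
  have i: "i < n" unfolding i_def by (rule esections_value(1)[OF s y])
  have C: "C \<in> lcos G H (L i)" unfolding C_def i_def by (rule esections_value(2)[OF s y])
  have CK: "set_mult G C K = l_coset G (inv h) x" unfolding C_def by (rule esections_value(3)[OF s y])
  have Cc: "C \<subseteq> carrier G" by (rule lcos_subset_carrier[OF H_subgroup L_subgroup[OF i] C])
  have xc: "x \<subseteq> carrier G" by (rule lcos_subset_carrier[OF H_subgroup K_subgroup x])
  have "set_mult G (l_coset G h C) K = l_coset G h (set_mult G C K)"
    by (rule setmult_lcos_assoc[OF Cc subgroup.subset[OF K_subgroup] hc])
  also have "\<dots> = x" unfolding CK using hc xc by (simp add: lcos_m_assoc lcos_mult_one)
  finally have "set_mult G (l_coset G h C) K = x" .
  moreover have "l_coset G h C \<in> lcos G H (L i)" by (rule l_coset_in_lcos[OF H_subgroup L_subgroup[OF i] h C])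
  moreover have "esact G H K h s x = (i, l_coset G h C)" unfolding esact_def i_def C_def using x by simp
  ultimately show "esact G H K h s x \<in> efib G H K n L x" unfolding efib_def using i by blast
qed

lemma esact_one:
  assumes s: "s \<in> esections G H K n L"
  shows "esact G H K \<one> s = s"
proof -
  have "esact G H K \<one> s = restrict s (lcos G H K)"
    unfolding esact_def
  proof (rule restrict_ext)
    fix x assume x: "x \<in> lcos G H K"
    have "x \<subseteq> carrier G" by (rule lcos_subset_carrier[OF H_subgroup K_subgroup x])
    then have x1: "l_coset G (inv \<one>) x = x" by (simp add: lcos_mult_one)
    have "snd (s x) \<subseteq> carrier G"
      using lcos_subset_carrier[OF H_subgroup L_subgroup esections_value(2)] esections_value(1) s x by blast
    then show "(fst (s (l_coset G (inv \<one>) x)), l_coset G \<one> (snd (s (l_coset G (inv \<one>) x)))) = s x"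
      unfolding x1 by (simp add: lcos_mult_one)
  qed
  also have "\<dots> = s" using s unfolding esections_def PiE_iff by (simp add: extensional_restrict)
  finally show ?thesis .
qed

lemma esact_mult:
  assumes a: "a \<in> H" and b: "b \<in> H" and s: "s \<in> esections G H K n L"
  shows "esact G H K (a \<otimes> b) s = esact G H K a (esact G H K b s)"
proof (rule ext)
  fix x
  show "esact G H K (a \<otimes> b) s x = esact G H K a (esact G H K b s) x"
  proof (cases "x \<in> lcos G H K")
    case False then show ?thesis unfolding esact_def by simp
  next
    case x: True
    have ac: "a \<in> carrier G" and bc: "b \<in> carrier G"
      using a b subgroup.mem_carrier[OF H_subgroup] by auto
    have xc: "x \<subseteq> carrier G" by (rule lcos_subset_carrier[OF H_subgroup K_subgroup x])
    have y: "l_coset G (inv a) x \<in> lcos G H K"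
      by (rule l_coset_in_lcos[OF H_subgroup K_subgroup subgroup.m_inv_closed[OF H_subgroup a] x])
    have ba: "l_coset G (inv b) (l_coset G (inv a) x) = l_coset G (inv (a \<otimes> b)) x"
      using ac bc xc by (simp add: lcos_m_assoc inv_mult_group)
    define z where "z = l_coset G (inv (a \<otimes> b)) x"
    have z: "z \<in> lcos G H K" unfolding z_def
      by (rule l_coset_in_lcos[OF H_subgroup K_subgroup
            subgroup.m_inv_closed[OF H_subgroup subgroup.m_closed[OF H_subgroup a b]] x])
    have "snd (s z) \<subseteq> carrier G"
      using lcos_subset_carrier[OF H_subgroup L_subgroup esections_value(2)] esections_value(1) s z by blast
    then show ?thesis
      unfolding esact_def using x y ba z_def ac bc by (simp add: lcos_m_assoc)
  qed
qed

lemma estab_subgrp_le: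
  assumes s: "s \<in> esections G H K n L"
  shows "subgrp_le G (estab G H K s) H"
proof -
  have "subgroup (estab G H K s) G"
  proof (rule subgroupI)
    show "estab G H K s \<subseteq> carrier G" unfolding estab_def using subgroup.subset[OF H_subgroup] by auto
    show "estab G H K s \<noteq> {}"
      unfolding estab_def using esact_one[OF s] subgroup.one_closed[OF H_subgroup] by auto
  next
    fix a assume "a \<in> estab G H K s"
    then have a: "a \<in> H" and as: "esact G H K a s = s" unfolding estab_def by auto
    have ia: "inv a \<in> H" by (rule subgroup.m_inv_closed[OF H_subgroup a])
    have "esact G H K (inv a) s = esact G H K (inv a \<otimes> a) s"
      using esact_mult[OF ia a s] as by simp
    also have "\<dots> = s" using subgroup.mem_carrier[OF H_subgroup a] esact_one[OF s] by simp
    finally show "inv a \<in> estab G H K s" unfolding estab_def using ia by auto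
  next
    fix a b assume "a \<in> estab G H K s" "b \<in> estab G H K s"
    then show "a \<otimes> b \<in> estab G H K s"
      unfolding estab_def using esact_mult[OF _ _ s] subgroup.m_closed[OF H_subgroup] by auto
  qed
  then show ?thesis unfolding subgrp_le_def estab_def using H_subgroup by auto
qed

lemma eorbits_some_in_esections:
  assumes Ob: "Ob \<in> eorbits G H K n L"
  shows "(SOME s. s \<in> Ob) \<in> esections G H K n L"
proof -
  obtain s0 where s0: "s0 \<in> esections G H K n L" and Ob_eq: "Ob = {esact G H K h s0 | h. h \<in> H}"
    using Ob unfolding eorbits_def by blast
  have "esact G H K \<one> s0 \<in> Ob" unfolding Ob_eq using subgroup.one_closed[OF H_subgroup] by blast
  then have "(SOME s. s \<in> Ob) \<in> Ob" by (rule someI[of "\<lambda>s. s \<in> Ob"])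
  then obtain h where "h \<in> H" "(SOME s. s \<in> Ob) = esact G H K h s0" unfolding Ob_eq by blast
  then show ?thesis using esact_closed[OF _ s0] by simp
qed

(* An element of the stabiliser of s that fixes the coset x = hK also fixes the coset
   s(x) = h'L_i, hence lies in h'L_i h'^-1. *)
lemma estab_Int_conjg_subset:
  assumes s: "s \<in> esections G H K n L" and x: "x \<in> lcos G H K"
    and h: "h \<in> carrier G" "x = l_coset G h K"
    and h': "h' \<in> carrier G" "snd (s x) = l_coset G h' (L (fst (s x)))"
  shows "estab G H K s \<inter> conjg G h K \<subseteq> conjg G h' (L (fst (s x)))"
proof
  define i where "i = fst (s x)"
  have i: "i < n" unfolding i_def by (rule esections_value(1)[OF s x])
  fix \<sigma> assume "\<sigma> \<in> estab G H K s \<inter> conjg G h K"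
  then have "\<sigma> \<in> H" and \<sigma>_fixes: "esact G H K \<sigma> s = s" and "\<sigma> \<in> conjg G h K"
    unfolding estab_def by auto
  then obtain k where \<sigma>c: "\<sigma> \<in> carrier G" and k: "k \<in> K" and \<sigma>_eq: "\<sigma> = h \<otimes> k \<otimes> inv h"
    using subgroup.mem_carrier[OF H_subgroup] unfolding conjg_def by blast
  have "inv \<sigma> \<otimes> h = h \<otimes> inv k"
    unfolding \<sigma>_eq using h(1) subgroup.mem_carrier[OF K_subgroup k] by (simp add: m_assoc inv_mult_group)
  moreover have "l_coset G h K = l_coset G (h \<otimes> inv k) K"
    by (rule l_repr_independence[OF l_coset_memI[OF subgroup.m_inv_closed[OF K_subgroup k]] h(1) K_subgroup])
  ultimately have "l_coset G (inv \<sigma>) x = x"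
    unfolding h(2) using lcos_m_assoc[OF subgroup.subset[OF K_subgroup] inv_closed[OF \<sigma>c] h(1)] by simp
  then have "esact G H K \<sigma> s x = (i, l_coset G \<sigma> (snd (s x)))"
    unfolding esact_def i_def using x by simp
  then have "l_coset G \<sigma> (snd (s x)) = snd (s x)" using \<sigma>_fixes by (metis snd_conv)
  moreover have "h' \<in> snd (s x)"
    using l_coset_memI[OF subgroup.one_closed[OF L_subgroup[OF i]], of h'] h' unfolding i_def by simp
  ultimately have "\<sigma> \<otimes> h' \<in> l_coset G h' (L i)"
    using l_coset_memI[of h' "snd (s x)" \<sigma>] h'(2) unfolding i_def by simp
  then obtain l where l: "l \<in> L i" and "\<sigma> \<otimes> h' = h' \<otimes> l"
    by (rule l_coset_memE)
  then have "\<sigma> = h' \<otimes> l \<otimes> inv h'"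
    using \<sigma>c h'(1) subgroup.mem_carrier[OF L_subgroup[OF i] l] by (metis inv_solve_right m_closed)
  then show "\<sigma> \<in> conjg G h' (L (fst (s x)))" unfolding conjg_def i_def[symmetric] using l by blast
qed

lemma efactorE:
  assumes s: "s \<in> esections G H K n L" and Ob: "Ob \<in> estab_orbits G H K s"
  obtains i h' Sx where "i < n" "h' \<in> carrier G" "subgrp_le G Sx (estab G H K s)"
    "subgrp_le G Sx (conjg G h' (L i))"
    "\<And>a. efactor G T H K L a s Ob = tnm T Sx (estab G H K s) (tres T (conjg G h' (L i)) Sx (tcj T h' (L i) (a i)))"
proof -
  let ?S = "estab G H K s"
  define x where "x = (SOME x. x \<in> Ob)"
  define h where "h = (SOME h. h \<in> x)"
  define h' where "h' = (SOME h'. h' \<in> snd (s x))"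
  have S: "subgroup ?S G" and SH: "?S \<subseteq> H"
    using estab_subgrp_le[OF s] unfolding subgrp_le_def by auto
  obtain x0 where x0: "x0 \<in> lcos G H K" and Ob_eq: "Ob = {l_coset G h1 x0 | h1. h1 \<in> ?S}"
    using Ob unfolding estab_orbits_def by blast
  have "l_coset G \<one> x0 \<in> Ob" unfolding Ob_eq using subgroup.one_closed[OF S] by blast
  then have "x \<in> Ob" unfolding x_def by (rule someI)
  then have x: "x \<in> lcos G H K"
    unfolding Ob_eq using SH l_coset_in_lcos[OF H_subgroup K_subgroup _ x0] by blast
  have h: "h \<in> carrier G" "x = l_coset G h K"
    unfolding h_def using lcos_some_rep[OF H_subgroup K_subgroup K_subset_H x] subgroup.mem_carrier[OF H_subgroup]
    by auto
  have i: "fst (s x) < n" by (rule esections_value(1)[OF s x])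
  have h': "h' \<in> carrier G" "snd (s x) = l_coset G h' (L (fst (s x)))"
    unfolding h'_def using esections_value(2)[OF s x] subgroup.mem_carrier[OF H_subgroup]
      lcos_some_rep[OF H_subgroup L_subgroup[OF i] L_subset_H[OF i]] by auto
  have Sx: "subgroup (?S \<inter> conjg G h K) G"
    by (rule subgroups_Inter_pair[OF S conjg_subgroup[OF h(1) K_subgroup]])
  show thesis
  proof (rule that[OF i h'(1)])
    show "subgrp_le G (?S \<inter> conjg G h K) ?S" using Sx S unfolding subgrp_le_def by auto
    show "subgrp_le G (?S \<inter> conjg G h K) (conjg G h' (L (fst (s x))))"
      using Sx conjg_subgroup[OF h'(1) L_subgroup[OF i]] estab_Int_conjg_subset[OF s x h h']
      unfolding subgrp_le_def by blast
    show "efactor G T H K L a s Ob = tnm T (?S \<inter> conjg G h K) ?S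
        (tres T (conjg G h' (L (fst (s x)))) (?S \<inter> conjg G h K) (tcj T h' (L (fst (s x))) (a (fst (s x)))))"
      for a unfolding efactor_def Let_def x_def h_def h'_def ..
  qed
qed

end

end

context finite_tambara
begin

context
  fixes H K and n :: nat and L s
  assumes KH: "subgrp_le G K H" and L: "\<And>i. i < n \<Longrightarrow> subgrp_le G (L i) K"
    and s: "s \<in> esections G H K n L"
begin

lemma efactor_mult:
  assumes Ob: "Ob \<in> estab_orbits G H K s"
    and a: "\<And>i. i < n \<Longrightarrow> a i \<in> carrier (tlev T (L i))" and b: "\<And>i. i < n \<Longrightarrow> b i \<in> carrier (tlev T (L i))"
  shows "efactor G T H K L (\<lambda>i. a i \<otimes>\<^bsub>tlev T (L i)\<^esub> b i) s Ob =
    efactor G T H K L a s Ob \<otimes>\<^bsub>tlev T (estab G H K s)\<^esub> efactor G T H K L b s Ob"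
proof (rule efactorE[where T = T, OF KH L s Ob])
  fix i h' Sx assume i: "i < n" and h': "h' \<in> carrier G" and SxS: "subgrp_le G Sx (estab G H K s)"
    and SxL: "subgrp_le G Sx (conjg G h' (L i))"
    and factor_eq: "\<And>a. efactor G T H K L a s Ob =
      tnm T Sx (estab G H K s) (tres T (conjg G h' (L i)) Sx (tcj T h' (L i) (a i)))"
  have Li: "subgroup (L i) G" by (rule subgrp_le_lower[OF L[OF i]])
  note ab = a[OF i] b[OF i]
  show ?thesis
    unfolding factor_eq cj_mult[OF h' Li ab] res_mult[OF SxL cj_closed[OF h' Li ab(1)] cj_closed[OF h' Li ab(2)]]
    by (rule nm_mult[OF SxS res_closed[OF SxL cj_closed[OF h' Li ab(1)]] res_closed[OF SxL cj_closed[OF h' Li ab(2)]]])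
qed

lemma efactor_in_tambara_ideal:
  assumes I: "tambara_ideal G T I" and Ob: "Ob \<in> estab_orbits G H K s"
    and a: "\<And>i. i < n \<Longrightarrow> a i \<in> I (L i)"
  shows "efactor G T H K L a s Ob \<in> I (estab G H K s)"
proof (rule efactorE[where T = T, OF KH L s Ob])
  fix i h' Sx assume i: "i < n" and h': "h' \<in> carrier G" and SxS: "subgrp_le G Sx (estab G H K s)"
    and SxL: "subgrp_le G Sx (conjg G h' (L i))"
    and factor_eq: "\<And>a. efactor G T H K L a s Ob =
      tnm T Sx (estab G H K s) (tres T (conjg G h' (L i)) Sx (tcj T h' (L i) (a i)))"
  show ?thesis unfolding factor_eq
    by (rule tambara_ideal_nm[OF I SxS tambara_ideal_res[OF I SxL
          tambara_ideal_cj[OF I h' subgrp_le_lower[OF L[OF i]] a[OF i]]]])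
qed

end

end

section \<open>Sums of transferred products\<close>

definition tr_prod_sums :: "('g, 'b) monoid_scheme \<Rightarrow> ('g, 'r) tambara \<Rightarrow> ('g set \<Rightarrow> 'r set)
    \<Rightarrow> ('g set \<Rightarrow> 'r set) \<Rightarrow> 'g set \<Rightarrow> 'r set" where
  "tr_prod_sums G T I J H =
    {finsum (tlev T H) (\<lambda>i. ttr T (L i) H (x i \<otimes>\<^bsub>tlev T (L i)\<^esub> y i)) {..<(n::nat)} | n L x y.
       \<forall>i<n. subgrp_le G (L i) H \<and> x i \<in> I (L i) \<and> y i \<in> J (L i)}"

lemma tr_prod_sumsI:
  assumes "\<And>i. i < n \<Longrightarrow> subgrp_le G (L i) H \<and> x i \<in> I (L i) \<and> y i \<in> J (L i)"
  shows "finsum (tlev T H) (\<lambda>i. ttr T (L i) H (x i \<otimes>\<^bsub>tlev T (L i)\<^esub> y i)) {..<(n::nat)}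
           \<in> tr_prod_sums G T I J H"
  unfolding tr_prod_sums_def using assms by blast

lemma tr_prod_sumsE:
  assumes "v \<in> tr_prod_sums G T I J H"
  obtains n :: nat and L x y
  where "v = finsum (tlev T H) (\<lambda>i. ttr T (L i) H (x i \<otimes>\<^bsub>tlev T (L i)\<^esub> y i)) {..<n}"
    and "\<And>i. i < n \<Longrightarrow> subgrp_le G (L i) H" "\<And>i. i < n \<Longrightarrow> x i \<in> I (L i)" "\<And>i. i < n \<Longrightarrow> y i \<in> J (L i)"
  using assms unfolding tr_prod_sums_def by blast

context finite_tambara
begin

context
  fixes I J assumes I: "tambara_ideal G T I" and J: "tambara_ideal G T J"
begin

lemma prod_in_carrier: "subgroup L G \<Longrightarrow> x \<in> I L \<Longrightarrow> y \<in> J L \<Longrightarrow> x \<otimes>\<^bsub>tlev T L\<^esub> y \<in> carrier (tlev T L)"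
  using tambara_ideal_subset[OF I] tambara_ideal_subset[OF J] monoid.m_closed[OF ring.is_monoid[OF level_ring]]
  by blast

lemma tr_prod_in_carrier:
  "subgrp_le G L H \<Longrightarrow> x \<in> I L \<Longrightarrow> y \<in> J L \<Longrightarrow> ttr T L H (x \<otimes>\<^bsub>tlev T L\<^esub> y) \<in> carrier (tlev T H)"
  using prod_in_carrier subgrp_le_lower tr_closed by blast

lemma tr_prod_in_tr_prod_sums:
  assumes LH: "subgrp_le G L H" and x: "x \<in> I L" and y: "y \<in> J L"
  shows "ttr T L H (x \<otimes>\<^bsub>tlev T L\<^esub> y) \<in> tr_prod_sums G T I J H"
proof -
  interpret R: ring "tlev T H" by (rule level_ring[OF subgrp_le_upper[OF LH]])
  have "finsum (tlev T H) (\<lambda>i. ttr T L H (x \<otimes>\<^bsub>tlev T L\<^esub> y)) {..<Suc 0} \<in> tr_prod_sums G T I J H"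
    by (rule tr_prod_sumsI[where L = "\<lambda>_. L" and x = "\<lambda>_. x" and y = "\<lambda>_. y"]) (use LH x y in simp)
  then show ?thesis using tr_prod_in_carrier[OF LH x y] by (simp add: lessThan_Suc)
qed

context
  fixes H assumes H: "subgroup H G"
begin

lemma tr_prod_sums_subset_carrier: "tr_prod_sums G T I J H \<subseteq> carrier (tlev T H)"
proof
  interpret R: ring "tlev T H" by (rule level_ring[OF H])
  fix v assume "v \<in> tr_prod_sums G T I J H"
  then show "v \<in> carrier (tlev T H)"
    by (elim tr_prod_sumsE) (auto intro!: R.finsum_closed tr_prod_in_carrier)
qed

lemma tr_prod_sums_zero: "\<zero>\<^bsub>tlev T H\<^esub> \<in> tr_prod_sums G T I J H"
proof -
  interpret R: ring "tlev T H" by (rule level_ring[OF H])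
  show ?thesis using tr_prod_sumsI[where n = 0 and G = G and H = H and I = I and J = J and T = T] by simp
qed

lemma tr_prod_sums_add:
  assumes a: "a \<in> tr_prod_sums G T I J H" and b: "b \<in> tr_prod_sums G T I J H"
  shows "a \<oplus>\<^bsub>tlev T H\<^esub> b \<in> tr_prod_sums G T I J H"
proof -
  interpret R: ring "tlev T H" by (rule level_ring[OF H])
  obtain n1 :: nat and L1 x1 y1 where a_eq: "a = (\<Oplus>\<^bsub>tlev T H\<^esub>i\<in>{..<n1}. ttr T (L1 i) H (x1 i \<otimes>\<^bsub>tlev T (L1 i)\<^esub> y1 i))"
    and a_terms: "\<And>i. i < n1 \<Longrightarrow> subgrp_le G (L1 i) H \<and> x1 i \<in> I (L1 i) \<and> y1 i \<in> J (L1 i)"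
    using a by (elim tr_prod_sumsE) blast
  obtain n2 :: nat and L2 x2 y2 where b_eq: "b = (\<Oplus>\<^bsub>tlev T H\<^esub>i\<in>{..<n2}. ttr T (L2 i) H (x2 i \<otimes>\<^bsub>tlev T (L2 i)\<^esub> y2 i))"
    and b_terms: "\<And>i. i < n2 \<Longrightarrow> subgrp_le G (L2 i) H \<and> x2 i \<in> I (L2 i) \<and> y2 i \<in> J (L2 i)"
    using b by (elim tr_prod_sumsE) blast
  define L where "L i = (if i < n1 then L1 i else L2 (i - n1))" for i
  define x where "x i = (if i < n1 then x1 i else x2 (i - n1))" for i
  define y where "y i = (if i < n1 then y1 i else y2 (i - n1))" for i
  define f where "f i = ttr T (L i) H (x i \<otimes>\<^bsub>tlev T (L i)\<^esub> y i)" for i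
  have terms: "subgrp_le G (L i) H \<and> x i \<in> I (L i) \<and> y i \<in> J (L i)" if "i < n1 + n2" for i
    using a_terms b_terms that unfolding L_def x_def y_def by auto
  have "finsum (tlev T H) f {..<n1 + n2} = finsum (tlev T H) f {..<n1} \<oplus>\<^bsub>tlev T H\<^esub> finsum (tlev T H) (\<lambda>i. f (n1 + i)) {..<n2}"
    using terms tr_prod_in_carrier unfolding f_def by (intro R.finsum_lessThan_add) auto
  also have "finsum (tlev T H) f {..<n1} = a"
    unfolding a_eq f_def L_def x_def y_def by (rule R.finsum_cong') (use a_terms tr_prod_in_carrier in auto)
  also have "finsum (tlev T H) (\<lambda>i. f (n1 + i)) {..<n2} = b"
    unfolding b_eq f_def L_def x_def y_def by (rule R.finsum_cong') (use b_terms tr_prod_in_carrier in auto)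
  finally show ?thesis
    using tr_prod_sumsI[of "n1 + n2" G L H x I y J T] terms unfolding f_def by simp
qed

lemma tr_prod_sums_finsum:
  "f \<in> A \<rightarrow> tr_prod_sums G T I J H \<Longrightarrow> finsum (tlev T H) f A \<in> tr_prod_sums G T I J H"
proof -
  interpret R: ring "tlev T H" by (rule level_ring[OF H])
  show "f \<in> A \<rightarrow> tr_prod_sums G T I J H \<Longrightarrow> finsum (tlev T H) f A \<in> tr_prod_sums G T I J H"
    by (rule R.finsum_closed_subset[OF tr_prod_sums_subset_carrier tr_prod_sums_zero tr_prod_sums_add])
qed

(* Frobenius reciprocity moves the multiplier z inside the transfers. *)
lemma tr_prod_sums_mult_in:
  assumes w: "w \<in> tr_prod_sums G T I J H" and z: "z \<in> carrier (tlev T H)"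
    and V: "V \<subseteq> carrier (tlev T H)" "\<zero>\<^bsub>tlev T H\<^esub> \<in> V"
      "\<And>a b. a \<in> V \<Longrightarrow> b \<in> V \<Longrightarrow> a \<oplus>\<^bsub>tlev T H\<^esub> b \<in> V"
    and step: "\<And>L x y. subgrp_le G L H \<Longrightarrow> x \<in> I L \<Longrightarrow> y \<in> J L \<Longrightarrow>
      ttr T L H (x \<otimes>\<^bsub>tlev T L\<^esub> (y \<otimes>\<^bsub>tlev T L\<^esub> tres T H L z)) \<in> V"
  shows "w \<otimes>\<^bsub>tlev T H\<^esub> z \<in> V"
proof -
  interpret R: cring "tlev T H" by (rule level_cring[OF H])
  obtain n :: nat and L x y where w_eq: "w = (\<Oplus>\<^bsub>tlev T H\<^esub>i\<in>{..<n}. ttr T (L i) H (x i \<otimes>\<^bsub>tlev T (L i)\<^esub> y i))"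
    and LH: "\<And>i. i < n \<Longrightarrow> subgrp_le G (L i) H" and x: "\<And>i. i < n \<Longrightarrow> x i \<in> I (L i)"
    and y: "\<And>i. i < n \<Longrightarrow> y i \<in> J (L i)"
    using w by (elim tr_prod_sumsE) blast
  have "w \<otimes>\<^bsub>tlev T H\<^esub> z =
      (\<Oplus>\<^bsub>tlev T H\<^esub>i\<in>{..<n}. ttr T (L i) H (x i \<otimes>\<^bsub>tlev T (L i)\<^esub> y i) \<otimes>\<^bsub>tlev T H\<^esub> z)"
    unfolding w_eq by (rule R.finsum_ldistr[OF _ z]) (use LH x y tr_prod_in_carrier in auto)
  also have "\<dots> \<in> V"
  proof (rule R.finsum_closed_subset[OF V])
    have "ttr T (L i) H (x i \<otimes>\<^bsub>tlev T (L i)\<^esub> y i) \<otimes>\<^bsub>tlev T H\<^esub> z \<in> V" if i: "i < n" for i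
    proof -
      interpret RL: cring "tlev T (L i)" by (rule level_cring[OF subgrp_le_lower[OF LH[OF i]]])
      have "x i \<in> carrier (tlev T (L i))" "y i \<in> carrier (tlev T (L i))"
        using x[OF i] y[OF i] I J tambara_ideal_subset subgrp_le_lower[OF LH[OF i]] by blast+
      moreover have "tres T H (L i) z \<in> carrier (tlev T (L i))" by (rule res_closed[OF LH[OF i] z])
      ultimately have "ttr T (L i) H (x i \<otimes>\<^bsub>tlev T (L i)\<^esub> y i) \<otimes>\<^bsub>tlev T H\<^esub> z =
          ttr T (L i) H (x i \<otimes>\<^bsub>tlev T (L i)\<^esub> (y i \<otimes>\<^bsub>tlev T (L i)\<^esub> tres T H (L i) z))"
        using tr_frobenius[OF LH[OF i] _ z] by (simp add: RL.m_assoc)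
      then show ?thesis using step[OF LH[OF i] x[OF i] y[OF i]] by simp
    qed
    then show "(\<lambda>i. ttr T (L i) H (x i \<otimes>\<^bsub>tlev T (L i)\<^esub> y i) \<otimes>\<^bsub>tlev T H\<^esub> z) \<in> {..<n} \<rightarrow> V"
      by auto
  qed
  finally show ?thesis .
qed

lemma tr_prod_sums_ideal: "ideal (tr_prod_sums G T I J H) (tlev T H)"
proof -
  interpret R: cring "tlev T H" by (rule level_cring[OF H])
  have mult: "v \<otimes>\<^bsub>tlev T H\<^esub> c \<in> tr_prod_sums G T I J H"
    if v: "v \<in> tr_prod_sums G T I J H" and c: "c \<in> carrier (tlev T H)" for v c
  proof (rule tr_prod_sums_mult_in[OF v c tr_prod_sums_subset_carrier tr_prod_sums_zero tr_prod_sums_add])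
    fix L x y assume LH: "subgrp_le G L H" and x: "x \<in> I L" and y: "y \<in> J L"
    have "y \<otimes>\<^bsub>tlev T L\<^esub> tres T H L c \<in> J L"
      by (rule ideal.I_r_closed[OF tambara_ideal_level[OF J subgrp_le_lower[OF LH]] y res_closed[OF LH c]])
    then show "ttr T L H (x \<otimes>\<^bsub>tlev T L\<^esub> (y \<otimes>\<^bsub>tlev T L\<^esub> tres T H L c)) \<in> tr_prod_sums G T I J H"
      by (rule tr_prod_in_tr_prod_sums[OF LH x])
  qed
  have carrier: "v \<in> carrier (tlev T H)" if "v \<in> tr_prod_sums G T I J H" for v
    using that tr_prod_sums_subset_carrier by blast
  show ?thesis
  proof (rule idealI[OF R.ring_axioms])
    show "subgroup (tr_prod_sums G T I J H) (add_monoid (tlev T H))"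
    proof (rule R.add.subgroupI[OF tr_prod_sums_subset_carrier])
      show "tr_prod_sums G T I J H \<noteq> {}" using tr_prod_sums_zero by blast
      fix a assume a: "a \<in> tr_prod_sums G T I J H"
      have "a \<otimes>\<^bsub>tlev T H\<^esub> (\<ominus>\<^bsub>tlev T H\<^esub> \<one>\<^bsub>tlev T H\<^esub>) \<in> tr_prod_sums G T I J H" by (rule mult[OF a]) simp
      then show "\<ominus>\<^bsub>tlev T H\<^esub> a \<in> tr_prod_sums G T I J H"
        using carrier[OF a] by (simp add: R.r_minus)
    qed (rule tr_prod_sums_add)
  qed (use mult carrier R.m_comm in metis)+
qed

end

lemma tr_prod_sums_additive_image:
  assumes H: "subgroup H G" and H': "subgroup H' G"
    and F: "F \<in> carrier (tlev T H) \<rightarrow> carrier (tlev T H')"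
    and F_add: "\<And>a b. a \<in> carrier (tlev T H) \<Longrightarrow> b \<in> carrier (tlev T H) \<Longrightarrow>
        F (a \<oplus>\<^bsub>tlev T H\<^esub> b) = F a \<oplus>\<^bsub>tlev T H'\<^esub> F b"
    and F_tr_prod: "\<And>L x y. subgrp_le G L H \<Longrightarrow> x \<in> I L \<Longrightarrow> y \<in> J L \<Longrightarrow>
        F (ttr T L H (x \<otimes>\<^bsub>tlev T L\<^esub> y)) \<in> tr_prod_sums G T I J H'"
    and v: "v \<in> tr_prod_sums G T I J H"
  shows "F v \<in> tr_prod_sums G T I J H'"
proof -
  obtain n :: nat and L x y where v_eq: "v = (\<Oplus>\<^bsub>tlev T H\<^esub>i\<in>{..<n}. ttr T (L i) H (x i \<otimes>\<^bsub>tlev T (L i)\<^esub> y i))"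
    and terms: "\<And>i. i < n \<Longrightarrow> subgrp_le G (L i) H" "\<And>i. i < n \<Longrightarrow> x i \<in> I (L i)"
      "\<And>i. i < n \<Longrightarrow> y i \<in> J (L i)"
    using v by (elim tr_prod_sumsE) blast
  have "F v = finsum (tlev T H') (F \<circ> (\<lambda>i. ttr T (L i) H (x i \<otimes>\<^bsub>tlev T (L i)\<^esub> y i))) {..<n}"
    unfolding v_eq
    by (rule additive_hom_finsum[of "tlev T H" "tlev T H'" F])
      (use level_ring[OF H] level_ring[OF H'] F F_add terms tr_prod_in_carrier in \<open>auto simp: ring.is_abelian_group\<close>)
  also have "\<dots> \<in> tr_prod_sums G T I J H'"
    by (rule tr_prod_sums_finsum[OF H']) (use terms F_tr_prod in auto)
  finally show ?thesis .
qed

lemma tr_prod_sums_tr: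
  assumes KH: "subgrp_le G K H" and v: "v \<in> tr_prod_sums G T I J K"
  shows "ttr T K H v \<in> tr_prod_sums G T I J H"
proof (rule tr_prod_sums_additive_image[OF subgrp_le_lower[OF KH] subgrp_le_upper[OF KH] _ _ _ v])
  show "ttr T K H \<in> carrier (tlev T K) \<rightarrow> carrier (tlev T H)" using tr_closed[OF KH] by auto
  show "ttr T K H (a \<oplus>\<^bsub>tlev T K\<^esub> b) = ttr T K H a \<oplus>\<^bsub>tlev T H\<^esub> ttr T K H b"
    if "a \<in> carrier (tlev T K)" "b \<in> carrier (tlev T K)" for a b
    using tr_add[OF KH that] .
next
  fix L x y assume LK: "subgrp_le G L K" and x: "x \<in> I L" and y: "y \<in> J L"
  have "ttr T K H (ttr T L K (x \<otimes>\<^bsub>tlev T L\<^esub> y)) = ttr T L H (x \<otimes>\<^bsub>tlev T L\<^esub> y)"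
    by (rule tr_trans[OF LK KH prod_in_carrier[OF subgrp_le_lower[OF LK] x y]])
  then show "ttr T K H (ttr T L K (x \<otimes>\<^bsub>tlev T L\<^esub> y)) \<in> tr_prod_sums G T I J H"
    using tr_prod_in_tr_prod_sums[OF subgrp_le_trans[OF LK KH] x y] by simp
qed

lemma tr_prod_sums_cj:
  assumes g: "g \<in> carrier G" and H: "subgroup H G" and v: "v \<in> tr_prod_sums G T I J H"
  shows "tcj T g H v \<in> tr_prod_sums G T I J (conjg G g H)"
proof (rule tr_prod_sums_additive_image[OF H conjg_subgroup[OF g H] _ _ _ v])
  show "tcj T g H \<in> carrier (tlev T H) \<rightarrow> carrier (tlev T (conjg G g H))" using cj_closed[OF g H] by auto
  show "tcj T g H (a \<oplus>\<^bsub>tlev T H\<^esub> b) = tcj T g H a \<oplus>\<^bsub>tlev T (conjg G g H)\<^esub> tcj T g H b"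
    if "a \<in> carrier (tlev T H)" "b \<in> carrier (tlev T H)" for a b
    using cj_add[OF g H that] .
next
  fix L x y assume LH: "subgrp_le G L H" and x: "x \<in> I L" and y: "y \<in> J L"
  have L: "subgroup L G" by (rule subgrp_le_lower[OF LH])
  have "x \<in> carrier (tlev T L)" "y \<in> carrier (tlev T L)"
    using x y tambara_ideal_subset[OF I L] tambara_ideal_subset[OF J L] by auto
  then have "tcj T g H (ttr T L H (x \<otimes>\<^bsub>tlev T L\<^esub> y)) =
      ttr T (conjg G g L) (conjg G g H) (tcj T g L x \<otimes>\<^bsub>tlev T (conjg G g L)\<^esub> tcj T g L y)"
    using cj_tr[OF g LH prod_in_carrier[OF L x y]] cj_mult[OF g L] by simp
  also have "\<dots> \<in> tr_prod_sums G T I J (conjg G g H)"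
    by (rule tr_prod_in_tr_prod_sums[OF conjg_subgrp_le[OF g LH]
          tambara_ideal_cj[OF I g L x] tambara_ideal_cj[OF J g L y]])
  finally show "tcj T g H (ttr T L H (x \<otimes>\<^bsub>tlev T L\<^esub> y)) \<in> tr_prod_sums G T I J (conjg G g H)" .
qed

lemma tr_prod_sums_mackey_term:
  assumes K: "subgroup K G" and L: "subgroup L G" and g: "g \<in> carrier G"
    and x: "x \<in> I L" and y: "y \<in> J L"
  defines "M \<equiv> conjg G (inv g) K \<inter> L"
  shows "ttr T (K \<inter> conjg G g L) K (tcj T g M (tres T L M (x \<otimes>\<^bsub>tlev T L\<^esub> y)))
    \<in> tr_prod_sums G T I J K"
proof -
  have M: "subgroup M G"
    unfolding M_def by (rule subgroups_Inter_pair[OF conjg_subgroup[OF inv_closed[OF g] K] L])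
  have M_le_L: "subgrp_le G M L" using M L unfolding subgrp_le_def M_def by auto
  have gM_eq: "K \<inter> conjg G g L = conjg G g M"
    unfolding M_def by (rule conjg_Int_conjg_inv[OF g K L, symmetric])
  have gM: "subgrp_le G (conjg G g M) K"
    using conjg_subgroup[OF g M] K gM_eq unfolding subgrp_le_def by auto
  have "x \<in> carrier (tlev T L)" "y \<in> carrier (tlev T L)"
    using x y tambara_ideal_subset[OF I L] tambara_ideal_subset[OF J L] by auto
  then have "tcj T g M (tres T L M (x \<otimes>\<^bsub>tlev T L\<^esub> y)) =
      tcj T g M (tres T L M x) \<otimes>\<^bsub>tlev T (conjg G g M)\<^esub> tcj T g M (tres T L M y)"
    using res_mult[OF M_le_L] cj_mult[OF g M] res_closed[OF M_le_L] by simp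
  moreover have "ttr T (conjg G g M) K
      (tcj T g M (tres T L M x) \<otimes>\<^bsub>tlev T (conjg G g M)\<^esub> tcj T g M (tres T L M y)) \<in> tr_prod_sums G T I J K"
    by (rule tr_prod_in_tr_prod_sums[OF gM tambara_ideal_cj[OF I g M tambara_ideal_res[OF I M_le_L x]]
          tambara_ideal_cj[OF J g M tambara_ideal_res[OF J M_le_L y]]])
  ultimately show ?thesis unfolding gM_eq by simp
qed

lemma tr_prod_sums_res:
  assumes KH: "subgrp_le G K H" and v: "v \<in> tr_prod_sums G T I J H"
  shows "tres T H K v \<in> tr_prod_sums G T I J K"
proof (rule tr_prod_sums_additive_image[OF subgrp_le_upper[OF KH] subgrp_le_lower[OF KH] _ _ _ v])
  show "tres T H K \<in> carrier (tlev T H) \<rightarrow> carrier (tlev T K)" using res_closed[OF KH] by auto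
  show "tres T H K (a \<oplus>\<^bsub>tlev T H\<^esub> b) = tres T H K a \<oplus>\<^bsub>tlev T K\<^esub> tres T H K b"
    if "a \<in> carrier (tlev T H)" "b \<in> carrier (tlev T H)" for a b
    using res_add[OF KH that] .
next
  fix L x y assume LH: "subgrp_le G L H" and x: "x \<in> I L" and y: "y \<in> J L"
  have H: "subgroup H G" and K: "subgroup K G" and L: "subgroup L G"
    using KH LH by (auto dest: subgrp_le_lower subgrp_le_upper)
  have "tres T H K (ttr T L H (x \<otimes>\<^bsub>tlev T L\<^esub> y)) =
      (\<Oplus>\<^bsub>tlev T K\<^esub> D \<in> dcos G H K L.
         (let g = (SOME g. g \<in> D); M = conjg G (inv g) K \<inter> L in
          ttr T (K \<inter> conjg G g L) K (tcj T g M (tres T L M (x \<otimes>\<^bsub>tlev T L\<^esub> y)))))"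
    by (rule res_tr_mackey[OF KH LH prod_in_carrier[OF L x y]])
  also have "\<dots> \<in> tr_prod_sums G T I J K"
  proof (rule tr_prod_sums_finsum[OF K], rule Pi_I)
    fix D assume D: "D \<in> dcos G H K L"
    have "(SOME g. g \<in> D) \<in> carrier G"
      using dcos_some_in[OF H K L _ _ D] KH LH subgroup.mem_carrier[OF H] by (auto simp: subgrp_le_def)
    then show "(let g = (SOME g. g \<in> D); M = conjg G (inv g) K \<inter> L in
        ttr T (K \<inter> conjg G g L) K (tcj T g M (tres T L M (x \<otimes>\<^bsub>tlev T L\<^esub> y)))) \<in> tr_prod_sums G T I J K"
      unfolding Let_def by (rule tr_prod_sums_mackey_term[OF K L _ x y])
  qed
  finally show "tres T H K (ttr T L H (x \<otimes>\<^bsub>tlev T L\<^esub> y)) \<in> tr_prod_sums G T I J K" .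
qed

lemma eterm_in_tr_prod_sums:
  assumes KH: "subgrp_le G K H" and L: "\<And>i. i < n \<Longrightarrow> subgrp_le G (L i) K"
    and x: "\<And>i. i < n \<Longrightarrow> x i \<in> I (L i)" and y: "\<And>i. i < n \<Longrightarrow> y i \<in> J (L i)"
    and s: "s \<in> esections G H K n L"
  shows "eterm G T H K L (\<lambda>i. x i \<otimes>\<^bsub>tlev T (L i)\<^esub> y i) s \<in> tr_prod_sums G T I J H"
proof -
  let ?S = "estab G H K s" and ?Obs = "estab_orbits G H K s"
  have SH: "subgrp_le G ?S H" by (rule estab_subgrp_le[OF KH L s])
  have S: "subgroup ?S G" by (rule subgrp_le_lower[OF SH])
  interpret RS: cring "tlev T ?S" by (rule level_cring[OF S])
  have "finite H" using finite_carrier subgroup.subset[OF subgrp_le_upper[OF KH]] finite_subset by blast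
  then have fin: "finite ?Obs" by (rule finite_estab_orbits)
  have ne: "?Obs \<noteq> {}"
    by (rule estab_orbits_nonempty[OF subgrp_le_upper[OF KH] subgrp_le_lower[OF KH]])
  have xy: "x i \<in> carrier (tlev T (L i))" "y i \<in> carrier (tlev T (L i))" if "i < n" for i
    using x[OF that] y[OF that] tambara_ideal_subset[OF I] tambara_ideal_subset[OF J]
      subgrp_le_lower[OF L[OF that]] by blast+
  have fx: "efactor G T H K L x s \<in> ?Obs \<rightarrow> I ?S" and fy: "efactor G T H K L y s \<in> ?Obs \<rightarrow> J ?S"
    using efactor_in_tambara_ideal[OF KH L s] I J x y by auto
  then have carrier: "efactor G T H K L x s \<in> ?Obs \<rightarrow> carrier (tlev T ?S)"
    "efactor G T H K L y s \<in> ?Obs \<rightarrow> carrier (tlev T ?S)"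
    using tambara_ideal_subset[OF I S] tambara_ideal_subset[OF J S] by auto
  have "finprod (tlev T ?S) (efactor G T H K L (\<lambda>i. x i \<otimes>\<^bsub>tlev T (L i)\<^esub> y i) s) ?Obs =
      finprod (tlev T ?S) (\<lambda>Ob. efactor G T H K L x s Ob \<otimes>\<^bsub>tlev T ?S\<^esub> efactor G T H K L y s Ob) ?Obs"
    by (rule RS.finprod_cong') (use carrier efactor_mult[OF KH L s] xy in \<open>auto intro!: RS.m_closed\<close>)
  also have "\<dots> = finprod (tlev T ?S) (efactor G T H K L x s) ?Obs \<otimes>\<^bsub>tlev T ?S\<^esub> finprod (tlev T ?S) (efactor G T H K L y s) ?Obs"
    by (rule RS.finprod_multf[OF carrier])
  also have "ttr T ?S H \<dots> \<in> tr_prod_sums G T I J H"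
    by (rule tr_prod_in_tr_prod_sums[OF SH RS.finprod_in_ideal[OF tambara_ideal_level[OF I S] fin ne fx]
          RS.finprod_in_ideal[OF tambara_ideal_level[OF J S] fin ne fy]])
  finally show ?thesis unfolding eterm_eq_tr_finprod_efactor .
qed

lemma tr_prod_sums_nm:
  assumes KH: "subgrp_le G K H" and v: "v \<in> tr_prod_sums G T I J K"
  shows "tnm T K H v \<in> tr_prod_sums G T I J H"
proof -
  obtain n :: nat and L x y where v_eq: "v = (\<Oplus>\<^bsub>tlev T K\<^esub>i\<in>{..<n}. ttr T (L i) K (x i \<otimes>\<^bsub>tlev T (L i)\<^esub> y i))"
    and LK: "\<And>i. i < n \<Longrightarrow> subgrp_le G (L i) K" and x: "\<And>i. i < n \<Longrightarrow> x i \<in> I (L i)"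
    and y: "\<And>i. i < n \<Longrightarrow> y i \<in> J (L i)"
    using v by (elim tr_prod_sumsE) blast
  have "tnm T K H v = eformula G T H K n L (\<lambda>i. x i \<otimes>\<^bsub>tlev T (L i)\<^esub> y i)"
    unfolding v_eq
    by (rule nm_sum_tr_exponential[OF KH]) (use LK x y prod_in_carrier[OF subgrp_le_lower[OF LK]] in auto)
  also have "\<dots> \<in> tr_prod_sums G T I J H"
    unfolding eformula_def
    by (rule tr_prod_sums_finsum[OF subgrp_le_upper[OF KH]])
      (use eterm_in_tr_prod_sums[OF KH LK x y] eorbits_some_in_esections[OF KH LK] in auto)
  finally show ?thesis .
qed

lemma tambara_ideal_tr_prod_sums: "tambara_ideal G T (tr_prod_sums G T I J)"
  unfolding tambara_ideal_def
proof (intro conjI allI impI subsetI)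
  fix H assume "subgroup H G"
  then show "ideal (tr_prod_sums G T I J H) (tlev T H)" by (rule tr_prod_sums_ideal)
qed (auto intro: tr_prod_sums_res tr_prod_sums_tr tr_prod_sums_nm tr_prod_sums_cj)

end

section \<open>Products and powers of Tambara ideals\<close>

lemma tambara_ideal_tprod:
  assumes I: "tambara_ideal G T I" and J: "tambara_ideal G T J"
  shows "tambara_ideal G T (tprod G T I J)"
  unfolding tprod_def
  by (rule tambara_ideal_tgen)
    (rule ring.ideal_prod_in_carrier[OF level_ring tambara_ideal_level[OF I] tambara_ideal_level[OF J]])

lemma tprod_le:
  assumes I: "tambara_ideal G T I" and J: "tambara_ideal G T J"
  shows "tideal_le G (tprod G T I J) I" "tideal_le G (tprod G T I J) J"
proof -
  have "ideal_prod (tlev T H) (I H) (J H) \<subseteq> I H \<inter> J H" if "subgroup H G" for H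
    by (rule ring.ideal_prod_inter[OF level_ring tambara_ideal_level[OF I] tambara_ideal_level[OF J]]) fact+
  then have gen_I: "tideal_le G (\<lambda>H. ideal_prod (tlev T H) (I H) (J H)) I"
    and gen_J: "tideal_le G (\<lambda>H. ideal_prod (tlev T H) (I H) (J H)) J"
    unfolding tideal_le_def by auto
  show "tideal_le G (tprod G T I J) I" unfolding tprod_def by (rule tgen_least[OF I gen_I])
  show "tideal_le G (tprod G T I J) J" unfolding tprod_def by (rule tgen_least[OF J gen_J])
qed

lemma tprod_mono:
  assumes I': "tambara_ideal G T I'" and J': "tambara_ideal G T J'"
    and le: "tideal_le G I I'" "tideal_le G J J'"
  shows "tideal_le G (tprod G T I J) (tprod G T I' J')"
  unfolding tprod_def[of G T I J]
proof (rule tgen_least[OF tambara_ideal_tprod[OF I' J']], unfold tideal_le_def, intro allI impI)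
  fix H assume H: "subgroup H G"
  show "ideal_prod (tlev T H) (I H) (J H) \<subseteq> tprod G T I' J' H"
    by (rule ideal_prod_subset_ideal[OF tambara_ideal_level[OF tambara_ideal_tprod[OF I' J'] H]])
      (rule tprod_contains[where I = I' and J = J', OF H tideal_leD[OF le(1) H] tideal_leD[OF le(2) H]])
qed

lemma tprod_le_tr_prod_sums:
  assumes I: "tambara_ideal G T I" and J: "tambara_ideal G T J"
  shows "tideal_le G (tprod G T I J) (tr_prod_sums G T I J)"
  unfolding tprod_def
proof (rule tgen_least[OF tambara_ideal_tr_prod_sums[OF I J]], unfold tideal_le_def, intro allI impI)
  fix H assume H: "subgroup H G"
  show "ideal_prod (tlev T H) (I H) (J H) \<subseteq> tr_prod_sums G T I J H"
  proof (rule ideal_prod_subset_ideal[OF tr_prod_sums_ideal[OF I J H]])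
    fix x y assume x: "x \<in> I H" and y: "y \<in> J H"
    have "ttr T H H (x \<otimes>\<^bsub>tlev T H\<^esub> y) = x \<otimes>\<^bsub>tlev T H\<^esub> y"
      by (rule tr_self[OF H prod_in_carrier[OF I J H x y]])
    then show "x \<otimes>\<^bsub>tlev T H\<^esub> y \<in> tr_prod_sums G T I J H"
      using tr_prod_in_tr_prod_sums[OF I J subgrp_le_refl[OF H] x y] by simp
  qed
qed

lemma tprod_assoc_le:
  assumes I1: "tambara_ideal G T I1" and I2: "tambara_ideal G T I2" and I3: "tambara_ideal G T I3"
  shows "tideal_le G (tprod G T (tprod G T I1 I2) I3) (tprod G T I1 (tprod G T I2 I3))"
  unfolding tprod_def[of G T "tprod G T I1 I2" I3]
proof (rule tgen_least[OF tambara_ideal_tprod[OF I1 tambara_ideal_tprod[OF I2 I3]]],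
    unfold tideal_le_def, intro allI impI)
  let ?R = "tprod G T I1 (tprod G T I2 I3)"
  have R: "tambara_ideal G T ?R" by (rule tambara_ideal_tprod[OF I1 tambara_ideal_tprod[OF I2 I3]])
  fix H assume H: "subgroup H G"
  interpret RH: ideal "?R H" "tlev T H" by (rule tambara_ideal_level[OF R H])
  show "ideal_prod (tlev T H) (tprod G T I1 I2 H) (I3 H) \<subseteq> ?R H"
  proof (rule ideal_prod_subset_ideal[OF RH.ideal_axioms])
    fix w z assume w: "w \<in> tprod G T I1 I2 H" and z: "z \<in> I3 H"
    show "w \<otimes>\<^bsub>tlev T H\<^esub> z \<in> ?R H"
    proof (rule tr_prod_sums_mult_in[OF I1 I2 H])
      show "w \<in> tr_prod_sums G T I1 I2 H" by (rule tideal_leD[OF tprod_le_tr_prod_sums[OF I1 I2] H w])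
      show "z \<in> carrier (tlev T H)" using z tambara_ideal_subset[OF I3 H] by blast
      fix L x y assume LH: "subgrp_le G L H" and x: "x \<in> I1 L" and y: "y \<in> I2 L"
      have L: "subgroup L G" by (rule subgrp_le_lower[OF LH])
      have "y \<otimes>\<^bsub>tlev T L\<^esub> tres T H L z \<in> tprod G T I2 I3 L"
        by (rule tprod_contains[where I = I2 and J = I3, OF L y tambara_ideal_res[OF I3 LH z]])
      then have "x \<otimes>\<^bsub>tlev T L\<^esub> (y \<otimes>\<^bsub>tlev T L\<^esub> tres T H L z) \<in> ?R L"
        by (rule tprod_contains[where I = I1, OF L x])
      then show "ttr T L H (x \<otimes>\<^bsub>tlev T L\<^esub> (y \<otimes>\<^bsub>tlev T L\<^esub> tres T H L z)) \<in> ?R H"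
        by (rule tambara_ideal_tr[OF R LH])
    qed (use RH.a_closed in auto)
  qed
qed

lemma tambara_ideal_tpow:
  assumes A: "tambara_ideal G T A"
  shows "tambara_ideal G T (tpow G T A k)"
proof (cases k)
  case 0
  then show ?thesis by (simp add: tambara_ideal_top)
next
  case (Suc m)
  have "tambara_ideal G T (tpow G T A (Suc m))"
    by (induction m) (simp_all add: A tambara_ideal_tprod)
  then show ?thesis using Suc by simp
qed

lemma tpow_add_le:
  assumes A: "tambara_ideal G T A" and a: "1 \<le> a" and b: "1 \<le> b"
  shows "tideal_le G (tpow G T A (a + b)) (tprod G T (tpow G T A a) (tpow G T A b))"
  using b
proof (induction b rule: nat_induct_at_least)
  case base
  obtain a' where "a = Suc a'" using a by (cases a) auto
  then show ?case by (simp add: tideal_le_refl)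
next
  case (Suc b)
  obtain a' where a': "a = Suc a'" using a by (cases a) auto
  obtain b' where b': "b = Suc b'" using Suc.hyps by (cases b) auto
  have "tideal_le G (tprod G T (tpow G T A (a + b)) A) (tprod G T (tprod G T (tpow G T A a) (tpow G T A b)) A)"
    by (rule tprod_mono[OF tambara_ideal_tprod[OF tambara_ideal_tpow[OF A] tambara_ideal_tpow[OF A]] A
          Suc.IH tideal_le_refl])
  also have "tideal_le G \<dots> (tprod G T (tpow G T A a) (tprod G T (tpow G T A b) A))"
    by (rule tprod_assoc_le[OF tambara_ideal_tpow[OF A] tambara_ideal_tpow[OF A] A])
  finally show ?case using a' b' by simp
qed

lemma tpow_le_tprod_iff:
  assumes A: "tambara_ideal G T A" and I: "tambara_ideal G T I" and J: "tambara_ideal G T J"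
  shows "(\<exists>n \<ge> 1. tideal_le G (tpow G T A n) (tprod G T I J)) \<longleftrightarrow>
    (\<exists>n \<ge> 1. tideal_le G (tpow G T A n) I) \<and> (\<exists>n \<ge> 1. tideal_le G (tpow G T A n) J)"
proof
  assume "\<exists>n \<ge> 1. tideal_le G (tpow G T A n) (tprod G T I J)"
  then show "(\<exists>n \<ge> 1. tideal_le G (tpow G T A n) I) \<and> (\<exists>n \<ge> 1. tideal_le G (tpow G T A n) J)"
    using tprod_le[OF I J] tideal_le_trans by blast
next
  assume "(\<exists>n \<ge> 1. tideal_le G (tpow G T A n) I) \<and> (\<exists>n \<ge> 1. tideal_le G (tpow G T A n) J)"
  then obtain n m where n: "1 \<le> n" "tideal_le G (tpow G T A n) I"
    and m: "1 \<le> m" "tideal_le G (tpow G T A m) J"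
    by blast
  have "tideal_le G (tpow G T A (n + m)) (tprod G T (tpow G T A n) (tpow G T A m))"
    by (rule tpow_add_le[OF A n(1) m(1)])
  also have "tideal_le G \<dots> (tprod G T I J)"
    by (rule tprod_mono[OF I J n(2) m(2)])
  finally show "\<exists>n \<ge> 1. tideal_le G (tpow G T A n) (tprod G T I J)"
    using n(1) by (intro exI[of _ "n + m"]) simp
qed

lemma tambara_ideal_tgen1: "subgroup H G \<Longrightarrow> x \<in> carrier (tlev T H) \<Longrightarrow> tambara_ideal G T (tgen1 G T H x)"
  unfolding tgen1_def by (rule tambara_ideal_tgen) auto

end

theorem proposition4p29:
  fixes G :: "('g, 'b) monoid_scheme" and T :: "('g, 'r) tambara"
    and I J :: "'g set \<Rightarrow> 'r set"
  assumes "group G" and "finite (carrier G)"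
    and "tambara_functor G T"
    and "tambara_ideal G T I" and "tambara_ideal G T J"
  shows "\<forall>H. subgroup H G \<longrightarrow>
           trad G T (tprod G T I J) H = trad G T I H \<inter> trad G T J H"
proof (intro allI impI)
  fix H assume H: "subgroup H G"
  interpret finite_tambara G T
    by (intro finite_tambara.intro finite_tambara_axioms.intro) (use assms in auto)
  have "x \<in> trad G T (tprod G T I J) H \<longleftrightarrow> x \<in> trad G T I H \<and> x \<in> trad G T J H" for x
    unfolding trad_def
    using tpow_le_tprod_iff[OF tambara_ideal_tgen1[OF H] assms(4,5)] by auto
  then show "trad G T (tprod G T I J) H = trad G T I H \<inter> trad G T J H" by blast
qed

end
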